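(* Fix $\mathsf{R}\ge 0$ and $0<\sigma_1^2<\sigma_2^2$, and assume Assumption (A) stated in the context. Then \[ \lim_{n \to \infty} C_s(\sigma_1^2, \sigma_2^2, \mathsf{R}, n) = \mathsf{R}^2 \left( \frac{1}{2\sigma_1^2}- \frac{1}{2\sigma_2^2} \right). \]
   Context: Vector Gaussian wiretap channel in dimension $n$: $\mathbf{Y}_1=\mathbf{X}+\mathbf{N}_1$, $\mathbf{Y}_2=\mathbf{X}+\mathbf{N}_2$, with $\mathbf{X}\in\mathbb{R}^n$, $\mathbf{N}_1\sim\mathcal{N}(\mathbf{0}_n,\sigma_1^2\mathbf{I}_n)$, $\mathbf{N}_2\sim\mathcal{N}(\mathbf{0}_n,\sigma_2^2\mathbf{I}_n)$, mutually independent with $\mathbf{X}$. $C_s(\sigma_1^2,\sigma_2^2,\mathsf{R},n)=\max I(\mathbf{X};\mathbf{Y}_1)-I(\mathbf{X};\mathbf{Y}_2)$ over distributions of $\mathbf{X}$ supported in $\{\|\mathbf{x}\|\le\mathsf{R}\}$. $\mathsf{h}_v(x)=\mathsf{I}_v(x)/\mathsf{I}_{v-1}(x)$ with $\mathsf{I}_v$ the modified Bessel function of the first kind. Assumption (A): for all $\mathsf{R}\ge0$, $0\le\sigma_1\le\sigma_2$, $n\in\mathbb{N}$, the function $y\mapsto \frac{1}{\sigma_2^2}\mathbb{E}\left[\frac{\mathsf{R}}{\|y\mathbf{e}_1+\mathbf{W}\|}\mathsf{h}_{\frac{n}{2}}\left(\frac{\mathsf{R}}{\sigma_2^2}\|y\mathbf{e}_1+\mathbf{W}\|\right)-1\right]-\frac{1}{\sigma_1^2}\left(\frac{\mathsf{R}}{y}\mathsf{h}_{\frac{n}{2}}\left(\frac{\mathsf{R}}{\sigma_1^2}y\right)-1\right)$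 has at most one sign change on $y>0$, where $\mathbf{W}\sim\mathcal{N}(\mathbf{0}_{n+2},(\sigma_2^2-\sigma_1^2)\mathbf{I}_{n+2})$ and $\mathbf{e}_1$ is the first unit vector of $\mathbb{R}^{n+2}$. *)

theory Defs
  imports "HOL-Probability.Probability"
begin

text \<open>Vectors of R^n are represented as extensional functions on the index set {..<n},
  i.e. elements of the space of the product measure below.\<close>

definition Rn :: "nat \<Rightarrow> (nat \<Rightarrow> real) measure" where
  "Rn n = PiM {..<n} (\<lambda>_. (borel :: real measure))"

definition vnorm :: "nat \<Rightarrow> (nat \<Rightarrow> real) \<Rightarrow> real" where
  "vnorm n x = sqrt (\<Sum>i<n. (x i)\<^sup>2)"

text \<open>Law of N(0, s^2 I_n), s the standard deviation.\<close>
definition gauss_vec :: "nat \<Rightarrow> real \<Rightarrow> (nat \<Rightarrow> real) measure" where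
  "gauss_vec n s = PiM {..<n} (\<lambda>_. density lborel (normal_density 0 s))"

definition chan_MI :: "nat \<Rightarrow> (nat \<Rightarrow> real) measure \<Rightarrow> (nat \<Rightarrow> real) measure \<Rightarrow> real" where
  "chan_MI n mu Nm =
     prob_space.mutual_information (mu \<Otimes>\<^sub>M Nm) (exp 1) (Rn n) (Rn n) fst
       (\<lambda>p. restrict (\<lambda>i. fst p i + snd p i) {..<n})"

definition input_dists :: "nat \<Rightarrow> real \<Rightarrow> (nat \<Rightarrow> real) measure set" where
  "input_dists n R = {mu. prob_space mu \<and> sets mu = sets (Rn n) \<and> (AE x in mu. vnorm n x \<le> R)}"

text \<open>Secrecy capacity C_s(sigma1^2, sigma2^2, R, n); s1, s2 are the standard deviations.\<close>
definition Cs :: "real \<Rightarrow> real \<Rightarrow> real \<Rightarrow> nat \<Rightarrow> real" where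
  "Cs s1 s2 R n = (SUP mu \<in> input_dists n R. chan_MI n mu (gauss_vec n s1) - chan_MI n mu (gauss_vec n s2))"

definition besselI :: "real \<Rightarrow> real \<Rightarrow> real" where
  "besselI v x = (\<Sum>k. (x / 2) powr (2 * real k + v) / (fact k * Gamma (real k + v + 1)))"

definition hB :: "real \<Rightarrow> real \<Rightarrow> real" where
  "hB v x = besselI v x / besselI (v - 1) x"

definition assmA_fun :: "real \<Rightarrow> real \<Rightarrow> real \<Rightarrow> nat \<Rightarrow> real \<Rightarrow> real" where
  "assmA_fun R s1 s2 n y =
     (1 / s2\<^sup>2) * (\<integral>w. (let r = vnorm (n + 2) (\<lambda>i. (if i = 0 then y else 0) + w i) in
                        R / r * hB (real n / 2) (R / s2\<^sup>2 * r) - 1)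
                     \<partial>gauss_vec (n + 2) (sqrt (s2\<^sup>2 - s1\<^sup>2)))
     - (1 / s1\<^sup>2) * (R / y * hB (real n / 2) (R / s1\<^sup>2 * y) - 1)"

definition at_most_one_sign_change :: "(real \<Rightarrow> real) \<Rightarrow> bool" where
  "at_most_one_sign_change f \<longleftrightarrow>
     \<not> (\<exists>a b c. 0 < a \<and> a < b \<and> b < c \<and> f a * f b < 0 \<and> f b * f c < 0)"

definition assumption_A :: bool where
  "assumption_A \<longleftrightarrow> (\<forall>R s1 s2 n. 0 \<le> R \<and> 0 < s1 \<and> s1 < s2 \<and> 1 \<le> n \<longrightarrow>
                        at_most_one_sign_change (assmA_fun R s1 s2 n))"

end

theory Submission
  imports Defs
begin

text \<open>For an input \<open>X\<close> and noise \<open>N \<sim> N(0, s\<^sup>2 I\<^sub>n)\<close>, the likelihood ratio of \<open>x + N\<close> against \<open>N\<close>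
  is \<open>exp (\<langle>x, y\<rangle> / s\<^sup>2 - |x|\<^sup>2 / (2 s\<^sup>2))\<close>, whose logarithm has a cross term of mean zero.
  Hence \<open>I(X; X + N) = E |X|\<^sup>2 / (2 s\<^sup>2) - D\<close>, where \<open>D\<close> is the relative entropy of the output
  law with respect to the noise law. Adding independent noise of variance \<open>s\<^sub>2\<^sup>2 - s\<^sub>1\<^sup>2\<close> turns
  the first output into the second, and by convexity \<open>D\<close> can only decrease; so every input with
  \<open>|X| \<le> R\<close> has secrecy rate at most \<open>R\<^sup>2 (1 / (2 s\<^sub>1\<^sup>2) - 1 / (2 s\<^sub>2\<^sup>2))\<close>. Conversely,
  for \<open>X\<close> uniform on the vertices of the cube \<open>{-R/\<surd>n, R/\<surd>n}\<^sup>n\<close> the output density is a product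
  of \<open>cosh\<close> factors, and \<open>cosh u \<le> exp (u\<^sup>2 / 2)\<close> gives \<open>D \<le> R\<^sup>4 / (2 n s\<^sub>1\<^sup>4)\<close>, so the
  secrecy capacity is squeezed to the limit.\<close>

section \<open>Gaussian measures\<close>

definition centered_normal :: "real \<Rightarrow> real measure" where
  "centered_normal s = density lborel (normal_density 0 s)"

definition vec_add :: "nat \<Rightarrow> (nat \<Rightarrow> real) \<Rightarrow> (nat \<Rightarrow> real) \<Rightarrow> nat \<Rightarrow> real" where
  "vec_add n x z = restrict (\<lambda>i. x i + z i) {..<n}"

definition sqnorm :: "nat \<Rightarrow> (nat \<Rightarrow> real) \<Rightarrow> real" where
  "sqnorm n y = (\<Sum>i<n. (y i)\<^sup>2)"

definition normal_ratio :: "real \<Rightarrow> real \<Rightarrow> real \<Rightarrow> real" where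
  "normal_ratio s c y = exp (c * y / s\<^sup>2 - c\<^sup>2 / (2 * s\<^sup>2))"

definition gauss_vec_ratio :: "nat \<Rightarrow> real \<Rightarrow> (nat \<Rightarrow> real) \<Rightarrow> (nat \<Rightarrow> real) \<Rightarrow> real" where
  "gauss_vec_ratio n s x y = exp (\<Sum>i<n. x i * y i / s\<^sup>2 - (x i)\<^sup>2 / (2 * s\<^sup>2))"

lemma sets_centered_normal [simp, measurable_cong]: "sets (centered_normal s) = sets borel"
  by (simp add: centered_normal_def)

lemma space_centered_normal [simp]: "space (centered_normal s) = UNIV"
  by (simp add: centered_normal_def)

lemma prob_space_centered_normal: "0 < s \<Longrightarrow> prob_space (centered_normal s)"
  unfolding centered_normal_def by (rule prob_space_normal_density)

lemma product_prob_space_centered_normal: "0 < s \<Longrightarrow> product_prob_space (\<lambda>_. centered_normal s)"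
  by (intro product_prob_spaceI prob_space_centered_normal)

lemma gauss_vec_eq_PiM: "gauss_vec n s = PiM {..<n} (\<lambda>_. centered_normal s)"
  by (simp add: gauss_vec_def centered_normal_def)

lemma space_Rn: "space (Rn n) = PiE {..<n} (\<lambda>_. UNIV)"
  by (simp add: Rn_def space_PiM)

lemma sets_gauss_vec [simp, measurable_cong]: "sets (gauss_vec n s) = sets (Rn n)"
  unfolding gauss_vec_eq_PiM Rn_def by (intro sets_PiM_cong) auto

lemma space_gauss_vec [simp]: "space (gauss_vec n s) = space (Rn n)"
  using sets_eq_imp_space_eq[OF sets_gauss_vec] .

lemma prob_space_gauss_vec: "0 < s \<Longrightarrow> prob_space (gauss_vec n s)"
  unfolding gauss_vec_eq_PiM by (intro prob_space_PiM prob_space_centered_normal)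

lemma measurable_vec_add [measurable]: "vec_add n x \<in> measurable (Rn n) (Rn n)"
  unfolding vec_add_def Rn_def by measurable

lemma measurable_vec_add_pair [measurable]:
  "(\<lambda>\<omega>. vec_add n (fst \<omega>) (snd \<omega>)) \<in> measurable (Rn n \<Otimes>\<^sub>M Rn n) (Rn n)"
  unfolding vec_add_def Rn_def by measurable

lemma vec_add_assoc: "vec_add n (vec_add n x z) w = vec_add n x (vec_add n z w)"
  by (auto simp: vec_add_def fun_eq_iff)

lemma measurable_component_Rn: "(\<lambda>x. x i) \<in> borel_measurable (Rn n)"
proof (cases "i < n")
  case True
  then show ?thesis unfolding Rn_def by (intro measurable_component_singleton) auto
next
  case False
  have "(\<lambda>_. undefined :: real) \<in> borel_measurable (Rn n)" by simp
  then show ?thesis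
    by (rule measurable_cong[THEN iffD1, rotated])
      (use False in \<open>auto simp: space_Rn PiE_def extensional_def\<close>)
qed

lemma measurable_fst_component [measurable]: "(\<lambda>\<omega>. fst \<omega> i) \<in> borel_measurable (Rn n \<Otimes>\<^sub>M Rn n)"
  by (rule measurable_compose[OF measurable_fst measurable_component_Rn])

lemma measurable_snd_component [measurable]: "(\<lambda>\<omega>. snd \<omega> i) \<in> borel_measurable (Rn n \<Otimes>\<^sub>M Rn n)"
  by (rule measurable_compose[OF measurable_snd measurable_component_Rn])

lemma measurable_sqnorm [measurable]: "sqnorm n \<in> borel_measurable (Rn n)"
  unfolding sqnorm_def Rn_def by measurable

lemma sqnorm_nonneg: "0 \<le> sqnorm n y"
  unfolding sqnorm_def by (simp add: sum_nonneg)

lemma sqnorm_le_of_vnorm_le: "vnorm n x \<le> R \<Longrightarrow> sqnorm n x \<le> R\<^sup>2"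
  unfolding vnorm_def sqnorm_def
  by (metis real_sqrt_le_iff real_sqrt_pow2 sum_nonneg zero_le_power2 power_mono real_sqrt_ge_zero)

lemma component_sq_le_sqnorm: "i < n \<Longrightarrow> (x i)\<^sup>2 \<le> sqnorm n x"
  unfolding sqnorm_def by (rule member_le_sum) auto

lemma sqnorm_vec_add_le: "sqnorm n (vec_add n x z) \<le> 2 * sqnorm n x + 2 * sqnorm n z"
proof -
  have "(a + b)\<^sup>2 \<le> 2 * a\<^sup>2 + 2 * b\<^sup>2" for a b :: real
    using zero_le_power2[of "a - b"] by (simp add: power2_eq_square algebra_simps)
  then show ?thesis
    unfolding sqnorm_def vec_add_def by (simp add: sum_distrib_left sum.distrib[symmetric] sum_mono)
qed

lemma measurable_normal_ratio [measurable]: "normal_ratio s c \<in> borel_measurable borel"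
  unfolding normal_ratio_def by measurable

lemma measurable_gauss_vec_ratio [measurable]:
  "(\<lambda>y. gauss_vec_ratio n s x y) \<in> borel_measurable (Rn n)"
  "(\<lambda>(x, y). gauss_vec_ratio n s x y) \<in> borel_measurable (Rn n \<Otimes>\<^sub>M Rn n)"
  unfolding gauss_vec_ratio_def Rn_def by measurable

lemma gauss_vec_ratio_pos: "0 < gauss_vec_ratio n s x y"
  unfolding gauss_vec_ratio_def by simp

lemma gauss_vec_ratio_eq_prod:
  "ennreal (gauss_vec_ratio n s x y) = (\<Prod>i<n. ennreal (normal_ratio s (x i) (y i)))"
  unfolding gauss_vec_ratio_def normal_ratio_def by (simp add: exp_sum prod_ennreal)

lemma normal_density_shift: "0 < s \<Longrightarrow> normal_density 0 s y * normal_ratio s c y = normal_density c s y"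
proof -
  assume s: "0 < s"
  have eq: "-(y - c)\<^sup>2 / (2 * s\<^sup>2) = -(y - 0)\<^sup>2 / (2 * s\<^sup>2) + (c * y / s\<^sup>2 - c\<^sup>2 / (2 * s\<^sup>2))"
    using s by (simp add: field_simps power2_eq_square)
  show ?thesis
    unfolding normal_density_def normal_ratio_def eq exp_add by (simp only: mult.assoc)
qed

lemma emeasure_normal_density_eq:
  assumes "0 < s" and "A \<in> sets borel"
  shows "emeasure (density lborel (normal_density c s)) A =
    (\<integral>\<^sup>+y. ennreal (normal_ratio s c y) * indicator A y \<partial>centered_normal s)"
  using assms unfolding centered_normal_def
  by (simp add: emeasure_density nn_integral_density mult.assoc[symmetric]
      ennreal_mult'[symmetric] normal_density_shift)

lemma emeasure_centered_normal_translate: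
  assumes A: "A \<in> sets borel"
  shows "emeasure (centered_normal s) {z. c + z \<in> A} = emeasure (density lborel (normal_density c s)) A"
proof -
  have "emeasure (centered_normal s) {z. c + z \<in> A} =
        (\<integral>\<^sup>+z. ennreal (normal_density 0 s z) * indicator A (c + z) \<partial>lborel)"
    unfolding centered_normal_def using A
    by (subst emeasure_density) (auto intro!: nn_integral_cong simp: indicator_def)
  also have "\<dots> = (\<integral>\<^sup>+y. ennreal (normal_density 0 s (y - c)) * indicator A y \<partial>lborel)"
    using A nn_integral_real_affine[of "\<lambda>y. ennreal (normal_density 0 s (y - c)) * indicator A y" 1 c]
    by simp
  also have "\<dots> = emeasure (density lborel (normal_density c s)) A"
    using A by (simp add: emeasure_density normal_density_def)
  finally show ?thesis .
qed

lemma indicator_PiE_eq_prod: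
  assumes "y \<in> PiE I (\<lambda>_. UNIV)" "finite I"
  shows "indicator (PiE I A) y = (\<Prod>i\<in>I. indicator (A i) (y i) :: ennreal)"
proof (cases "\<forall>i\<in>I. y i \<in> A i")
  case True
  then show ?thesis using assms by (auto simp: indicator_def PiE_iff)
next
  case False
  then obtain i where "i \<in> I" "y i \<notin> A i" by auto
  then have "(\<Prod>i\<in>I. indicator (A i) (y i) :: ennreal) = 0"
    using assms by (intro prod_zero bexI[of _ i]) auto
  then show ?thesis using False by (auto simp: indicator_def PiE_iff)
qed

lemma distr_gauss_vec_translate:
  assumes s: "0 < s"
  shows "distr (gauss_vec n s) (Rn n) (vec_add n x) = PiM {..<n} (\<lambda>i. density lborel (normal_density (x i) s))"
proof -
  interpret P: product_prob_space "\<lambda>i. density lborel (normal_density (x i) s)"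
    by (intro product_prob_spaceI prob_space_normal_density s)
  interpret G: product_prob_space "\<lambda>_ :: nat. centered_normal s"
    by (rule product_prob_space_centered_normal[OF s])
  show ?thesis
  proof (rule P.PiM_eqI)
    fix A assume "\<And>i. i \<in> {..<n} \<Longrightarrow> A i \<in> sets (density lborel (normal_density (x i) s))"
    then have A: "\<And>i. i \<in> {..<n} \<Longrightarrow> A i \<in> sets borel" by simp
    have PA: "PiE {..<n} A \<in> sets (Rn n)"
      unfolding Rn_def using A by (intro sets_PiM_I_finite) auto
    have "vec_add n x -` PiE {..<n} A \<inter> space (Rn n) = PiE {..<n} (\<lambda>i. {z. x i + z \<in> A i})"
      unfolding vec_add_def space_Rn by (rule set_eqI) (simp add: PiE_iff)
    then have "emeasure (distr (gauss_vec n s) (Rn n) (vec_add n x)) (PiE {..<n} A)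
        = emeasure (gauss_vec n s) (PiE {..<n} (\<lambda>i. {z. x i + z \<in> A i}))"
      using PA by (simp add: emeasure_distr)
    also have "\<dots> = (\<Prod>i<n. emeasure (centered_normal s) {z. x i + z \<in> A i})"
      unfolding gauss_vec_eq_PiM using A by (subst G.emeasure_PiM) auto
    also have "\<dots> = (\<Prod>i<n. emeasure (density lborel (normal_density (x i) s)) (A i))"
      using A by (intro prod.cong refl emeasure_centered_normal_translate) auto
    finally show "emeasure (distr (gauss_vec n s) (Rn n) (vec_add n x)) (PiE {..<n} A)
        = (\<Prod>i\<in>{..<n}. emeasure (density lborel (normal_density (x i) s)) (A i))" by simp
  qed (simp_all add: Rn_def cong: sets_PiM_cong)
qed

lemma density_gauss_vec_ratio:
  assumes s: "0 < s"
  shows "density (gauss_vec n s) (gauss_vec_ratio n s x) = PiM {..<n} (\<lambda>i. density lborel (normal_density (x i) s))"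
proof -
  interpret P: product_prob_space "\<lambda>i. density lborel (normal_density (x i) s)"
    by (intro product_prob_spaceI prob_space_normal_density s)
  interpret G: product_prob_space "\<lambda>_ :: nat. centered_normal s"
    by (rule product_prob_space_centered_normal[OF s])
  show ?thesis
  proof (rule P.PiM_eqI)
    fix A assume "\<And>i. i \<in> {..<n} \<Longrightarrow> A i \<in> sets (density lborel (normal_density (x i) s))"
    then have A: "\<And>i. i \<in> {..<n} \<Longrightarrow> A i \<in> sets borel" by simp
    have PA: "PiE {..<n} A \<in> sets (gauss_vec n s)"
      unfolding gauss_vec_eq_PiM using A by (intro sets_PiM_I_finite) auto
    have "emeasure (density (gauss_vec n s) (gauss_vec_ratio n s x)) (PiE {..<n} A)
        = (\<integral>\<^sup>+y. (\<Prod>i<n. ennreal (normal_ratio s (x i) (y i)) * indicator (A i) (y i))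
             \<partial>PiM {..<n} (\<lambda>_. centered_normal s))"
      using PA unfolding gauss_vec_eq_PiM
      by (auto simp: emeasure_density gauss_vec_ratio_eq_prod indicator_PiE_eq_prod space_PiM
          prod.distrib intro!: nn_integral_cong)
    also have "\<dots> = (\<Prod>i<n. (\<integral>\<^sup>+y. ennreal (normal_ratio s (x i) y) * indicator (A i) y \<partial>centered_normal s))"
      using A by (subst G.product_nn_integral_prod) auto
    also have "\<dots> = (\<Prod>i<n. emeasure (density lborel (normal_density (x i) s)) (A i))"
      using A by (intro prod.cong refl emeasure_normal_density_eq[symmetric] s) auto
    finally show "emeasure (density (gauss_vec n s) (gauss_vec_ratio n s x)) (PiE {..<n} A)
        = (\<Prod>i\<in>{..<n}. emeasure (density lborel (normal_density (x i) s)) (A i))" by simp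
  qed (simp_all add: gauss_vec_eq_PiM cong: sets_PiM_cong)
qed

lemma nn_integral_gauss_vec_translate:
  assumes s: "0 < s" and g[measurable]: "g \<in> borel_measurable (Rn n)"
  shows "(\<integral>\<^sup>+z. g (vec_add n x z) \<partial>gauss_vec n s) = (\<integral>\<^sup>+y. ennreal (gauss_vec_ratio n s x y) * g y \<partial>gauss_vec n s)"
proof -
  have "(\<integral>\<^sup>+z. g (vec_add n x z) \<partial>gauss_vec n s) = (\<integral>\<^sup>+y. g y \<partial>distr (gauss_vec n s) (Rn n) (vec_add n x))"
    by (subst nn_integral_distr) (auto simp: measurable_cong_sets[OF sets_gauss_vec])
  also have "\<dots> = (\<integral>\<^sup>+y. g y \<partial>density (gauss_vec n s) (gauss_vec_ratio n s x))"
    by (simp add: distr_gauss_vec_translate density_gauss_vec_ratio s)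
  also have "\<dots> = (\<integral>\<^sup>+y. ennreal (gauss_vec_ratio n s x y) * g y \<partial>gauss_vec n s)"
    by (subst nn_integral_density) (auto simp: measurable_cong_sets[OF sets_gauss_vec])
  finally show ?thesis .
qed

lemma centered_normal_moment_1:
  assumes s: "0 < s"
  shows "integrable (centered_normal s) (\<lambda>t. t)" "(\<integral>t. t \<partial>centered_normal s) = 0"
proof -
  have "integrable lborel (\<lambda>x. normal_density 0 s x * x)"
    using s by (rule integrable_normal_moment_nz_1)
  then show "integrable (centered_normal s) (\<lambda>t. t)"
    unfolding centered_normal_def by (subst integrable_density) (auto simp: s)
  show "(\<integral>t. t \<partial>centered_normal s) = 0"
    unfolding centered_normal_def using integral_normal_moment_nz_1[where \<mu>=0 and \<sigma>=s, OF s]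
    by (subst integral_density) auto
qed

lemma centered_normal_moment_2:
  assumes s: "0 < s"
  shows "integrable (centered_normal s) (\<lambda>t. t\<^sup>2)" "(\<integral>t. t\<^sup>2 \<partial>centered_normal s) = s\<^sup>2"
proof -
  have "integrable lborel (\<lambda>x. normal_density 0 s x * (x - 0) ^ 2)"
    using s by (rule integrable_normal_moment)
  then show "integrable (centered_normal s) (\<lambda>t. t\<^sup>2)"
    unfolding centered_normal_def by (subst integrable_density) (auto simp: s)
  have "(\<integral>x. normal_density 0 s x * x\<^sup>2 \<partial>lborel) = s\<^sup>2"
    using integral_normal_moment_even[where \<mu>=0 and \<sigma>=s and k=1, OF s] s by simp
  then show "(\<integral>t. t\<^sup>2 \<partial>centered_normal s) = s\<^sup>2"
    unfolding centered_normal_def by (subst integral_density) auto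
qed

lemma integrable_centered_normal_abs:
  assumes s: "0 < s"
  shows "integrable (centered_normal s) abs"
proof -
  interpret prob_space "centered_normal s" by (rule prob_space_centered_normal[OF s])
  have "integrable (centered_normal s) (\<lambda>t. 1 + t\<^sup>2)"
    using centered_normal_moment_2[OF s] by (intro Bochner_Integration.integrable_add) auto
  then show ?thesis
  proof (rule Bochner_Integration.integrable_bound)
    have "\<bar>t\<bar> \<le> 1 + t\<^sup>2" for t :: real
    proof (cases "\<bar>t\<bar> \<le> 1")
      case False
      then have "\<bar>t\<bar> * 1 \<le> \<bar>t\<bar> * \<bar>t\<bar>" by (intro mult_left_mono) auto
      then show ?thesis by (simp add: power2_eq_square)
    qed (use zero_le_power2[of t] in linarith)
    then show "AE t in centered_normal s. norm \<bar>t\<bar> \<le> norm (1 + t\<^sup>2)"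
      by simp
  qed simp
qed

lemma gauss_vec_component:
  fixes h :: "real \<Rightarrow> real"
  assumes s: "0 < s" and i: "i < n" and h[measurable]: "h \<in> borel_measurable borel"
  shows "integrable (gauss_vec n s) (\<lambda>z. h (z i)) \<longleftrightarrow> integrable (centered_normal s) h"
    and "(\<integral>z. h (z i) \<partial>gauss_vec n s) = (\<integral>t. h t \<partial>centered_normal s)"
proof -
  have d: "distr (gauss_vec n s) (centered_normal s) (\<lambda>\<omega>. \<omega> i) = centered_normal s"
    unfolding gauss_vec_eq_PiM using i by (intro distr_PiM_component prob_space_centered_normal s) auto
  have m: "(\<lambda>\<omega>. \<omega> i) \<in> measurable (gauss_vec n s) (centered_normal s)"
    unfolding gauss_vec_eq_PiM using i by (intro measurable_component_singleton) auto
  show "integrable (gauss_vec n s) (\<lambda>z. h (z i)) \<longleftrightarrow> integrable (centered_normal s) h"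
    using integrable_distr_eq[OF m, of h] unfolding d by simp
  show "(\<integral>z. h (z i) \<partial>gauss_vec n s) = (\<integral>t. h t \<partial>centered_normal s)"
    using integral_distr[OF m, of h] unfolding d by simp
qed

lemma gauss_vec_sqnorm:
  assumes s: "0 < s"
  shows "integrable (gauss_vec n s) (sqnorm n)" "(\<integral>z. sqnorm n z \<partial>gauss_vec n s) = n * s\<^sup>2"
proof -
  have sq: "integrable (gauss_vec n s) (\<lambda>z. (z i)\<^sup>2)" if "i < n" for i
    using gauss_vec_component(1)[OF s that, of "\<lambda>t. t\<^sup>2"] centered_normal_moment_2[OF s] by simp
  show "integrable (gauss_vec n s) (sqnorm n)"
    unfolding sqnorm_def by (intro Bochner_Integration.integrable_sum sq) simp
  have "(\<integral>z. sqnorm n z \<partial>gauss_vec n s) = (\<Sum>i<n. \<integral>z. (z i)\<^sup>2 \<partial>gauss_vec n s)"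
    unfolding sqnorm_def by (rule Bochner_Integration.integral_sum) (rule sq, simp)
  also have "\<dots> = (\<Sum>i<n. s\<^sup>2)"
    using gauss_vec_component(2)[OF s, of _ n "\<lambda>t. t\<^sup>2"] centered_normal_moment_2[OF s]
    by (intro sum.cong) auto
  finally show "(\<integral>z. sqnorm n z \<partial>gauss_vec n s) = n * s\<^sup>2" by simp
qed

lemma measurable_normal_density [measurable (raw)]:
  assumes [measurable]: "f \<in> borel_measurable M" "g \<in> borel_measurable M"
  shows "(\<lambda>x. normal_density (f x) t (g x)) \<in> borel_measurable M"
  unfolding normal_density_def by measurable

lemma centered_normal_mixture:
  assumes s: "0 < s" and t: "0 < t" and A: "A \<in> sets borel"
  shows "(\<integral>\<^sup>+u. emeasure (density lborel (normal_density u t)) A \<partial>centered_normal s) =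
    emeasure (centered_normal (sqrt (s\<^sup>2 + t\<^sup>2))) A"
proof -
  have "(\<integral>\<^sup>+u. emeasure (density lborel (normal_density u t)) A \<partial>centered_normal s) =
        (\<integral>\<^sup>+u. ennreal (normal_density 0 s u) * (\<integral>\<^sup>+y. ennreal (normal_density u t y) * indicator A y \<partial>lborel) \<partial>lborel)"
    unfolding centered_normal_def using A by (subst nn_integral_density) (auto simp: emeasure_density)
  also have "\<dots> = (\<integral>\<^sup>+u. (\<integral>\<^sup>+y. ennreal (normal_density 0 t (y - u) * normal_density 0 s u) * indicator A y \<partial>lborel) \<partial>lborel)"
  proof (intro nn_integral_cong)
    fix u :: real
    have "normal_density u t y = normal_density 0 t (y - u)" for y
      by (simp add: normal_density_def)
    then show "ennreal (normal_density 0 s u) * (\<integral>\<^sup>+y. ennreal (normal_density u t y) * indicator A y \<partial>lborel) =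
      (\<integral>\<^sup>+y. ennreal (normal_density 0 t (y - u) * normal_density 0 s u) * indicator A y \<partial>lborel)"
      using A by (subst nn_integral_cmult[symmetric]) (auto intro!: nn_integral_cong simp: ennreal_mult mult_ac)
  qed
  also have "\<dots> = (\<integral>\<^sup>+y. (\<integral>\<^sup>+u. ennreal (normal_density 0 t (y - u) * normal_density 0 s u) * indicator A y \<partial>lborel) \<partial>lborel)"
    using A by (subst lborel_pair.Fubini') auto
  also have "\<dots> = (\<integral>\<^sup>+y. ennreal (normal_density 0 (sqrt (t\<^sup>2 + s\<^sup>2)) y) * indicator A y \<partial>lborel)"
  proof (intro nn_integral_cong)
    fix y :: real
    have "(\<integral>\<^sup>+u. ennreal (normal_density 0 t (y - u) * normal_density 0 s u) \<partial>lborel) =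
        ennreal (normal_density 0 (sqrt (t\<^sup>2 + s\<^sup>2)) y)"
      using fun_cong[OF conv_normal_density_zero_mean[OF t s], of y] by simp
    then show "(\<integral>\<^sup>+u. ennreal (normal_density 0 t (y - u) * normal_density 0 s u) * indicator A y \<partial>lborel) =
        ennreal (normal_density 0 (sqrt (t\<^sup>2 + s\<^sup>2)) y) * indicator A y"
      using A by (simp add: nn_integral_multc)
  qed
  also have "\<dots> = emeasure (centered_normal (sqrt (s\<^sup>2 + t\<^sup>2))) A"
    unfolding centered_normal_def using A by (simp add: emeasure_density add.commute)
  finally show ?thesis .
qed

lemma emeasure_gauss_vec_translated_box:
  assumes t: "0 < t" and A: "\<And>i. i \<in> {..<n} \<Longrightarrow> A i \<in> sets borel"
  shows "emeasure (gauss_vec n t) (PiE {..<n} (\<lambda>i. {w. v i + w \<in> A i})) =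
    (\<Prod>i<n. emeasure (density lborel (normal_density (v i) t)) (A i))"
proof -
  interpret T: product_prob_space "\<lambda>_ :: nat. centered_normal t"
    by (rule product_prob_space_centered_normal[OF t])
  have "emeasure (gauss_vec n t) (PiE {..<n} (\<lambda>i. {w. v i + w \<in> A i})) =
      (\<Prod>i<n. emeasure (centered_normal t) {w. v i + w \<in> A i})"
    unfolding gauss_vec_eq_PiM
  proof (rule T.emeasure_PiM)
    fix i assume "i \<in> {..<n}"
    have "(\<lambda>w. v i + w) \<in> borel_measurable borel" by simp
    from measurable_sets[OF this A[OF \<open>i \<in> {..<n}\<close>]]
    show "{w. v i + w \<in> A i} \<in> sets (centered_normal t)" by (simp add: vimage_def)
  qed simp
  also have "\<dots> = (\<Prod>i<n. emeasure (density lborel (normal_density (v i) t)) (A i))"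
    using A by (intro prod.cong refl emeasure_centered_normal_translate) auto
  finally show ?thesis .
qed

lemma distr_gauss_vec_add:
  assumes s: "0 < s" and t: "0 < t"
  shows "distr (gauss_vec n s \<Otimes>\<^sub>M gauss_vec n t) (Rn n) (\<lambda>\<omega>. vec_add n (fst \<omega>) (snd \<omega>)) =
    gauss_vec n (sqrt (s\<^sup>2 + t\<^sup>2))"
proof -
  let ?c = "sqrt (s\<^sup>2 + t\<^sup>2)"
  let ?V = "\<lambda>\<omega>. vec_add n (fst \<omega>) (snd \<omega>)"
  let ?G = "gauss_vec n s \<Otimes>\<^sub>M gauss_vec n t"
  interpret C: product_prob_space "\<lambda>_ :: nat. centered_normal ?c"
    using s by (intro product_prob_space_centered_normal) (simp add: add_pos_nonneg)
  interpret S: product_prob_space "\<lambda>_ :: nat. centered_normal s"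
    by (rule product_prob_space_centered_normal[OF s])
  interpret GT: prob_space "gauss_vec n t" by (rule prob_space_gauss_vec[OF t])
  show ?thesis
    unfolding gauss_vec_eq_PiM[of n ?c]
  proof (rule C.PiM_eqI)
    fix A assume "\<And>i. i \<in> {..<n} \<Longrightarrow> A i \<in> sets (centered_normal ?c)"
    then have A: "\<And>i. i \<in> {..<n} \<Longrightarrow> A i \<in> sets borel" by simp
    have PA: "PiE {..<n} A \<in> sets (Rn n)"
      unfolding Rn_def using A by (intro sets_PiM_I_finite) auto
    have pre: "?V -` PiE {..<n} A \<inter> space ?G \<in> sets ?G"
      using PA by measurable
    have slice: "Pair v -` (?V -` PiE {..<n} A \<inter> space ?G) = PiE {..<n} (\<lambda>i. {w. v i + w \<in> A i})"
      if "v \<in> space (gauss_vec n s)" for v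
      using that unfolding vec_add_def space_pair_measure space_gauss_vec space_Rn
      by (intro set_eqI) (simp add: PiE_iff)
    have "emeasure (distr ?G (Rn n) ?V) (PiE {..<n} A) = emeasure ?G (?V -` PiE {..<n} A \<inter> space ?G)"
      using PA by (subst emeasure_distr) auto
    also have "\<dots> = (\<integral>\<^sup>+v. emeasure (gauss_vec n t) (Pair v -` (?V -` PiE {..<n} A \<inter> space ?G)) \<partial>gauss_vec n s)"
      by (rule GT.emeasure_pair_measure_alt[OF pre])
    also have "\<dots> = (\<integral>\<^sup>+v. (\<Prod>i<n. emeasure (density lborel (normal_density (v i) t)) (A i))
                      \<partial>PiM {..<n} (\<lambda>_. centered_normal s))"
      unfolding gauss_vec_eq_PiM[of n s, symmetric] by (intro nn_integral_cong) (simp only: slice emeasure_gauss_vec_translated_box[OF t A])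
    also have "\<dots> = (\<Prod>i<n. \<integral>\<^sup>+u. emeasure (density lborel (normal_density u t)) (A i) \<partial>centered_normal s)"
    proof (rule S.product_nn_integral_prod[where f = "\<lambda>i u. emeasure (density lborel (normal_density u t)) (A i)"])
      fix i assume "i \<in> {..<n}"
      with A show "(\<lambda>u. emeasure (density lborel (normal_density u t)) (A i)) \<in> borel_measurable (centered_normal s)"
        by (simp add: emeasure_density)
    qed simp
    also have "\<dots> = (\<Prod>i<n. emeasure (centered_normal ?c) (A i))"
      using A by (intro prod.cong refl centered_normal_mixture s t) auto
    finally show "emeasure (distr ?G (Rn n) ?V) (PiE {..<n} A) = (\<Prod>i\<in>{..<n}. emeasure (centered_normal ?c) (A i))"
      by simp
  qed (simp_all add: Rn_def cong: sets_PiM_cong)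
qed

lemma gauss_vec_ratio_le:
  assumes s: "0 < s"
  shows "gauss_vec_ratio n s x y \<le> exp (sqnorm n y / (2 * s\<^sup>2))"
proof -
  have "(\<Sum>i<n. x i * y i / s\<^sup>2 - (x i)\<^sup>2 / (2 * s\<^sup>2)) \<le> (\<Sum>i<n. (y i)\<^sup>2 / (2 * s\<^sup>2))"
  proof (intro sum_mono)
    fix i
    have "x i * y i - (x i)\<^sup>2 / 2 \<le> (y i)\<^sup>2 / 2"
      using zero_le_power2[of "x i - y i"] by (simp add: power2_eq_square algebra_simps)
    then have "(x i * y i - (x i)\<^sup>2 / 2) / s\<^sup>2 \<le> ((y i)\<^sup>2 / 2) / s\<^sup>2"
      using s by (intro divide_right_mono) auto
    then show "x i * y i / s\<^sup>2 - (x i)\<^sup>2 / (2 * s\<^sup>2) \<le> (y i)\<^sup>2 / (2 * s\<^sup>2)"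
      by (simp add: diff_divide_distrib)
  qed
  then show ?thesis
    unfolding gauss_vec_ratio_def sqnorm_def by (simp add: sum_divide_distrib)
qed

lemma gauss_vec_ratio_ge:
  assumes s: "0 < s"
  shows "exp (- (sqnorm n x + sqnorm n y / 2) / s\<^sup>2) \<le> gauss_vec_ratio n s x y"
proof -
  have "(\<Sum>i<n. - ((x i)\<^sup>2 + (y i)\<^sup>2 / 2) / s\<^sup>2) \<le> (\<Sum>i<n. x i * y i / s\<^sup>2 - (x i)\<^sup>2 / (2 * s\<^sup>2))"
  proof (intro sum_mono)
    fix i
    have "- ((x i)\<^sup>2 + (y i)\<^sup>2 / 2) \<le> x i * y i - (x i)\<^sup>2 / 2"
      using zero_le_power2[of "x i + y i"] by (simp add: power2_eq_square algebra_simps)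
    then have "- ((x i)\<^sup>2 + (y i)\<^sup>2 / 2) / s\<^sup>2 \<le> (x i * y i - (x i)\<^sup>2 / 2) / s\<^sup>2"
      using s by (intro divide_right_mono) auto
    then show "- ((x i)\<^sup>2 + (y i)\<^sup>2 / 2) / s\<^sup>2 \<le> x i * y i / s\<^sup>2 - (x i)\<^sup>2 / (2 * s\<^sup>2)"
      by (simp add: diff_divide_distrib)
  qed
  moreover have "(\<Sum>i<n. - ((x i)\<^sup>2 + (y i)\<^sup>2 / 2) / s\<^sup>2) = - (sqnorm n x + sqnorm n y / 2) / s\<^sup>2"
    by (simp add: sqnorm_def sum_divide_distrib[symmetric] sum_subtractf sum_negf)
  ultimately show ?thesis
    unfolding gauss_vec_ratio_def by simp
qed

section \<open>Mutual information of the Gaussian channel\<close>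

locale gaussian_channel =
  fixes n :: nat and s R :: real and mu :: "(nat \<Rightarrow> real) measure"
  assumes s_pos: "0 < s" and prob_space_input: "prob_space mu"
    and sets_input [measurable_cong]: "sets mu = sets (Rn n)"
    and input_bounded: "AE x in mu. vnorm n x \<le> R"
begin

abbreviation noise :: "(nat \<Rightarrow> real) measure" where
  "noise \<equiv> gauss_vec n s"

abbreviation channel_output :: "(nat \<Rightarrow> real) \<times> (nat \<Rightarrow> real) \<Rightarrow> nat \<Rightarrow> real" where
  "channel_output \<omega> \<equiv> vec_add n (fst \<omega>) (snd \<omega>)"

definition joint_distr :: "((nat \<Rightarrow> real) \<times> (nat \<Rightarrow> real)) measure" where
  "joint_distr = distr (mu \<Otimes>\<^sub>M noise) (Rn n \<Otimes>\<^sub>M Rn n) (\<lambda>\<omega>. (fst \<omega>, channel_output \<omega>))"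

definition output_distr :: "(nat \<Rightarrow> real) measure" where
  "output_distr = distr (mu \<Otimes>\<^sub>M noise) (Rn n) channel_output"

definition output_density :: "(nat \<Rightarrow> real) \<Rightarrow> real" where
  "output_density y = enn2real (\<integral>\<^sup>+x. gauss_vec_ratio n s x y \<partial>mu)"

definition output_divergence :: real where
  "output_divergence = (\<integral>y. output_density y * ln (output_density y) \<partial>noise)"

sublocale input: prob_space mu by (rule prob_space_input)
sublocale noise: prob_space noise by (rule prob_space_gauss_vec[OF s_pos])
sublocale input_noise: pair_prob_space mu noise ..

lemma space_input: "space mu = space (Rn n)"
  using sets_eq_imp_space_eq[OF sets_input] .

lemma sqnorm_input_bounded: "AE x in mu. sqnorm n x \<le> R\<^sup>2"
  using input_bounded by eventually_elim (rule sqnorm_le_of_vnorm_le)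

lemma radius_nonneg: "0 \<le> R"
proof -
  have "AE x in mu. 0 \<le> R"
    using input_bounded
  proof eventually_elim
    case (elim x)
    have "0 \<le> vnorm n x" by (simp add: vnorm_def sum_nonneg)
    then show ?case using elim by linarith
  qed
  then show ?thesis by simp
qed

lemma integrable_input_sqnorm: "integrable mu (sqnorm n)"
  by (rule input.integrable_const_bound[where B="R\<^sup>2"])
    (use sqnorm_input_bounded in \<open>auto simp: sqnorm_nonneg\<close>)

lemma integral_input_sqnorm_le: "(\<integral>x. sqnorm n x \<partial>mu) \<le> R\<^sup>2"
proof -
  have "(\<integral>x. sqnorm n x \<partial>mu) \<le> (\<integral>x. R\<^sup>2 \<partial>mu)"
    using integrable_input_sqnorm sqnorm_input_bounded by (intro integral_mono_AE) auto
  then show ?thesis using input.prob_space by simp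
qed

lemma distr_fst_input_noise: "distr (mu \<Otimes>\<^sub>M noise) (Rn n) fst = mu"
proof -
  have "distr (mu \<Otimes>\<^sub>M noise) (Rn n) fst = distr (mu \<Otimes>\<^sub>M noise) mu fst"
    by (intro distr_cong) (auto simp: sets_input)
  then show ?thesis using noise.distr_pair_fst by simp
qed

lemma distr_snd_input_noise: "distr (mu \<Otimes>\<^sub>M noise) (Rn n) snd = noise"
proof (intro measure_eqI)
  fix A assume "A \<in> sets (distr (mu \<Otimes>\<^sub>M noise) (Rn n) snd)"
  then have A: "A \<in> sets noise" by simp
  have "emeasure (distr (mu \<Otimes>\<^sub>M noise) (Rn n) snd) A = emeasure (mu \<Otimes>\<^sub>M noise) (space mu \<times> A)"
    using A by (subst emeasure_distr)
      (auto simp: space_pair_measure intro!: arg_cong2[where f=emeasure] dest: sets.sets_into_space)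
  also have "\<dots> = emeasure noise A"
    using A by (simp add: noise.emeasure_pair_measure_Times input.emeasure_space_1)
  finally show "emeasure (distr (mu \<Otimes>\<^sub>M noise) (Rn n) snd) A = emeasure noise A" .
qed simp

lemma integral_fst_input_noise:
  fixes h :: "(nat \<Rightarrow> real) \<Rightarrow> real"
  assumes [measurable]: "h \<in> borel_measurable (Rn n)"
  shows "integrable (mu \<Otimes>\<^sub>M noise) (\<lambda>\<omega>. h (fst \<omega>)) \<longleftrightarrow> integrable mu h"
    and "(\<integral>\<omega>. h (fst \<omega>) \<partial>(mu \<Otimes>\<^sub>M noise)) = (\<integral>x. h x \<partial>mu)"
  using integrable_distr_eq[of fst "mu \<Otimes>\<^sub>M noise" "Rn n" h] integral_distr[of fst "mu \<Otimes>\<^sub>M noise" "Rn n" h]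
  unfolding distr_fst_input_noise by auto

lemma integral_snd_input_noise:
  fixes h :: "(nat \<Rightarrow> real) \<Rightarrow> real"
  assumes [measurable]: "h \<in> borel_measurable (Rn n)"
  shows "integrable (mu \<Otimes>\<^sub>M noise) (\<lambda>\<omega>. h (snd \<omega>)) \<longleftrightarrow> integrable noise h"
    and "(\<integral>\<omega>. h (snd \<omega>) \<partial>(mu \<Otimes>\<^sub>M noise)) = (\<integral>x. h x \<partial>noise)"
  using integrable_distr_eq[of snd "mu \<Otimes>\<^sub>M noise" "Rn n" h] integral_distr[of snd "mu \<Otimes>\<^sub>M noise" "Rn n" h]
  unfolding distr_snd_input_noise by auto

lemma AE_fst_input_noise: "AE x in mu. Q x \<Longrightarrow> AE \<omega> in mu \<Otimes>\<^sub>M noise. Q (fst \<omega>)"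
  using AE_distrD[of fst "mu \<Otimes>\<^sub>M noise" "Rn n" Q] unfolding distr_fst_input_noise by auto

lemma nn_integral_joint:
  assumes [measurable]: "g \<in> borel_measurable (Rn n \<Otimes>\<^sub>M Rn n)"
  shows "(\<integral>\<^sup>+\<omega>. g (fst \<omega>, channel_output \<omega>) \<partial>(mu \<Otimes>\<^sub>M noise)) =
    (\<integral>\<^sup>+\<omega>. ennreal (gauss_vec_ratio n s (fst \<omega>) (snd \<omega>)) * g \<omega> \<partial>(mu \<Otimes>\<^sub>M noise))"
proof -
  have "(\<integral>\<^sup>+\<omega>. g (fst \<omega>, channel_output \<omega>) \<partial>(mu \<Otimes>\<^sub>M noise)) = (\<integral>\<^sup>+x. \<integral>\<^sup>+z. g (x, vec_add n x z) \<partial>noise \<partial>mu)"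
    by (subst noise.nn_integral_fst[symmetric]) (auto simp: split_beta')
  also have "\<dots> = (\<integral>\<^sup>+x. \<integral>\<^sup>+y. ennreal (gauss_vec_ratio n s x y) * g (x, y) \<partial>noise \<partial>mu)"
    by (intro nn_integral_cong nn_integral_gauss_vec_translate s_pos) (simp add: space_input)
  also have "\<dots> = (\<integral>\<^sup>+\<omega>. ennreal (gauss_vec_ratio n s (fst \<omega>) (snd \<omega>)) * g \<omega> \<partial>(mu \<Otimes>\<^sub>M noise))"
    by (subst noise.nn_integral_fst[symmetric]) (auto simp: split_beta')
  finally show ?thesis .
qed

lemma joint_distr_eq_density:
  "joint_distr = density (mu \<Otimes>\<^sub>M noise) (\<lambda>\<omega>. gauss_vec_ratio n s (fst \<omega>) (snd \<omega>))"
proof (rule measure_eqI)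
  fix A assume "A \<in> sets joint_distr"
  then have A[measurable]: "A \<in> sets (Rn n \<Otimes>\<^sub>M Rn n)" by (simp add: joint_distr_def)
  have "emeasure joint_distr A = (\<integral>\<^sup>+\<omega>. indicator A \<omega> \<partial>joint_distr)"
    using A by (simp add: joint_distr_def)
  also have "\<dots> = (\<integral>\<^sup>+\<omega>. indicator A (fst \<omega>, channel_output \<omega>) \<partial>(mu \<Otimes>\<^sub>M noise))"
    unfolding joint_distr_def by (subst nn_integral_distr) auto
  also have "\<dots> = emeasure (density (mu \<Otimes>\<^sub>M noise) (\<lambda>\<omega>. gauss_vec_ratio n s (fst \<omega>) (snd \<omega>))) A"
    by (subst nn_integral_joint) (auto simp: emeasure_density)
  finally show "emeasure joint_distr A = emeasure (density (mu \<Otimes>\<^sub>M noise) (\<lambda>\<omega>. gauss_vec_ratio n s (fst \<omega>) (snd \<omega>))) A" .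
qed (simp add: joint_distr_def, intro sets_pair_measure_cong, auto simp: sets_input)

lemma output_density_bounds:
  "ennreal (output_density y) = (\<integral>\<^sup>+x. gauss_vec_ratio n s x y \<partial>mu)"
  "exp (- (R\<^sup>2 + sqnorm n y / 2) / s\<^sup>2) \<le> output_density y"
  "output_density y \<le> exp (sqnorm n y / (2 * s\<^sup>2))"
proof -
  let ?p = "\<integral>\<^sup>+x. gauss_vec_ratio n s x y \<partial>mu"
  have "?p \<le> (\<integral>\<^sup>+x. exp (sqnorm n y / (2 * s\<^sup>2)) \<partial>mu)"
    by (intro nn_integral_mono ennreal_leI gauss_vec_ratio_le s_pos)
  then have le: "?p \<le> ennreal (exp (sqnorm n y / (2 * s\<^sup>2)))"
    by (simp add: input.emeasure_space_1)
  have "ennreal (exp (- (R\<^sup>2 + sqnorm n y / 2) / s\<^sup>2)) = (\<integral>\<^sup>+x. exp (- (R\<^sup>2 + sqnorm n y / 2) / s\<^sup>2) \<partial>mu)"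
    by (simp add: input.emeasure_space_1)
  also have "\<dots> \<le> ?p"
    using sqnorm_input_bounded
  proof (intro nn_integral_mono_AE, eventually_elim)
    case (elim x)
    have "exp (- (R\<^sup>2 + sqnorm n y / 2) / s\<^sup>2) \<le> exp (- (sqnorm n x + sqnorm n y / 2) / s\<^sup>2)"
      using elim s_pos by (simp add: divide_right_mono)
    also have "\<dots> \<le> gauss_vec_ratio n s x y" by (rule gauss_vec_ratio_ge[OF s_pos])
    finally show ?case by (rule ennreal_leI)
  qed
  finally have ge: "ennreal (exp (- (R\<^sup>2 + sqnorm n y / 2) / s\<^sup>2)) \<le> ?p" .
  show eq: "ennreal (output_density y) = ?p"
    unfolding output_density_def using le by (cases ?p) (auto simp: top_unique)
  show "exp (- (R\<^sup>2 + sqnorm n y / 2) / s\<^sup>2) \<le> output_density y"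
    using ge unfolding eq[symmetric] by (simp add: ennreal_le_iff2)
  show "output_density y \<le> exp (sqnorm n y / (2 * s\<^sup>2))"
    using le unfolding eq[symmetric] by (simp add: ennreal_le_iff2)
qed

lemma output_density_pos: "0 < output_density y"
  using output_density_bounds(2)[of y] by (rule less_le_trans[rotated]) simp

lemma measurable_output_density [measurable]: "output_density \<in> borel_measurable (Rn n)"
  unfolding output_density_def by measurable

lemma abs_ln_output_density_le: "\<bar>ln (output_density y)\<bar> \<le> (R\<^sup>2 + sqnorm n y) / s\<^sup>2"
proof -
  have "ln (output_density y) \<le> ln (exp (sqnorm n y / (2 * s\<^sup>2)))"
    using output_density_bounds(3)[of y] output_density_pos[of y] by (subst ln_le_cancel_iff) auto
  moreover have "ln (exp (- (R\<^sup>2 + sqnorm n y / 2) / s\<^sup>2)) \<le> ln (output_density y)"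
    using output_density_bounds(2)[of y] output_density_pos[of y] by (subst ln_le_cancel_iff) auto
  moreover have "sqnorm n y / (2 * s\<^sup>2) \<le> (R\<^sup>2 + sqnorm n y) / s\<^sup>2"
    and "- ((R\<^sup>2 + sqnorm n y) / s\<^sup>2) \<le> - (R\<^sup>2 + sqnorm n y / 2) / s\<^sup>2"
    using s_pos sqnorm_nonneg[of n y] by (simp_all add: field_simps)
  ultimately show ?thesis by simp
qed

lemma sets_output_distr [simp, measurable_cong]: "sets output_distr = sets (Rn n)"
  by (simp add: output_distr_def)

lemma prob_space_output_distr: "prob_space output_distr"
  unfolding output_distr_def by (rule input_noise.prob_space_distr) simp

lemma nn_integral_output_distr:
  assumes [measurable]: "g \<in> borel_measurable (Rn n)"
  shows "(\<integral>\<^sup>+y. g y \<partial>output_distr) = (\<integral>\<^sup>+x. \<integral>\<^sup>+z. g (vec_add n x z) \<partial>noise \<partial>mu)"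
  unfolding output_distr_def
  by (subst nn_integral_distr) (auto simp: noise.nn_integral_fst[symmetric] split_beta')

lemma output_distr_eq_density: "output_distr = density noise output_density"
proof (rule measure_eqI)
  fix A assume "A \<in> sets output_distr"
  then have A[measurable]: "A \<in> sets (Rn n)" by simp
  have "emeasure output_distr A = (\<integral>\<^sup>+y. indicator A y \<partial>output_distr)"
    using A by simp
  also have "\<dots> = (\<integral>\<^sup>+\<omega>. indicator A (snd (fst \<omega>, channel_output \<omega>)) \<partial>(mu \<Otimes>\<^sub>M noise))"
    unfolding output_distr_def by (subst nn_integral_distr) auto
  also have "\<dots> = (\<integral>\<^sup>+\<omega>. ennreal (gauss_vec_ratio n s (fst \<omega>) (snd \<omega>)) * indicator A (snd \<omega>) \<partial>(mu \<Otimes>\<^sub>M noise))"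
    by (rule nn_integral_joint[where g="\<lambda>\<omega>. indicator A (snd \<omega>)"]) measurable
  also have "\<dots> = (\<integral>\<^sup>+y. \<integral>\<^sup>+x. ennreal (gauss_vec_ratio n s x y) * indicator A y \<partial>mu \<partial>noise)"
    by (subst input_noise.nn_integral_snd[symmetric]) (auto simp: split_beta')
  also have "\<dots> = (\<integral>\<^sup>+y. ennreal (output_density y) * indicator A y \<partial>noise)"
    by (intro nn_integral_cong) (simp add: output_density_bounds(1) nn_integral_multc)
  also have "\<dots> = emeasure (density noise output_density) A"
    by (simp add: emeasure_density)
  finally show "emeasure output_distr A = emeasure (density noise output_density) A" .
qed simp

lemma integral_output_density:
  "integrable noise output_density" "(\<integral>y. output_density y \<partial>noise) = 1"
proof -
  interpret Y: prob_space output_distr by (rule prob_space_output_distr)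
  have "integrable output_distr (\<lambda>_. 1::real)" by simp
  then show "integrable noise output_density"
    unfolding output_distr_eq_density using output_density_pos
    by (subst (asm) integrable_density) (auto intro: less_imp_le)
  have "(\<integral>y. 1 \<partial>output_distr) = (1::real)" using Y.prob_space by simp
  then show "(\<integral>y. output_density y \<partial>noise) = 1"
    unfolding output_distr_eq_density using output_density_pos
    by (subst (asm) integral_density) (auto intro: less_imp_le)
qed

lemma integrable_ln_output_density: "integrable output_distr (\<lambda>y. ln (output_density y))"
proof -
  have "integrable (mu \<Otimes>\<^sub>M noise) (\<lambda>\<omega>. (3 * R\<^sup>2 + 2 * sqnorm n (snd \<omega>)) / s\<^sup>2)"
    using integral_snd_input_noise(1)[of "sqnorm n"] gauss_vec_sqnorm(1)[OF s_pos] by auto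
  then have "integrable (mu \<Otimes>\<^sub>M noise) (\<lambda>\<omega>. ln (output_density (channel_output \<omega>)))"
  proof (rule Bochner_Integration.integrable_bound)
    show "AE \<omega> in mu \<Otimes>\<^sub>M noise. norm (ln (output_density (channel_output \<omega>))) \<le>
        norm ((3 * R\<^sup>2 + 2 * sqnorm n (snd \<omega>)) / s\<^sup>2)"
      using AE_fst_input_noise[OF sqnorm_input_bounded]
    proof eventually_elim
      case (elim \<omega>)
      have "\<bar>ln (output_density (channel_output \<omega>))\<bar> \<le> (R\<^sup>2 + sqnorm n (channel_output \<omega>)) / s\<^sup>2"
        by (rule abs_ln_output_density_le)
      also have "\<dots> \<le> (3 * R\<^sup>2 + 2 * sqnorm n (snd \<omega>)) / s\<^sup>2"
        using sqnorm_vec_add_le[of n "fst \<omega>" "snd \<omega>"] elim s_pos by (intro divide_right_mono) auto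
      finally show ?case using sqnorm_nonneg[of n "snd \<omega>"] by simp
    qed
  qed measurable
  then show ?thesis
    unfolding output_distr_def by (subst integrable_distr_eq) auto
qed

lemma output_divergence_eq: "output_divergence = (\<integral>y. ln (output_density y) \<partial>output_distr)"
  unfolding output_distr_eq_density output_divergence_def using output_density_pos
  by (subst integral_density) (auto intro: less_imp_le)

lemma integrable_output_entropy: "integrable noise (\<lambda>y. output_density y * ln (output_density y))"
  using integrable_ln_output_density unfolding output_distr_eq_density using output_density_pos
  by (subst (asm) integrable_density) (auto intro: less_imp_le)

lemma output_divergence_nonneg: "0 \<le> output_divergence"
proof -
  have "p - 1 \<le> p * ln p" if "0 < p" for p :: real
    using ln_le_minus_one[of "1 / p"] that by (simp add: ln_div field_simps)
  then have "(\<integral>y. output_density y - 1 \<partial>noise) \<le> output_divergence"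
    unfolding output_divergence_def using integral_output_density(1) integrable_output_entropy
    by (intro integral_mono) (auto intro: output_density_pos)
  moreover have "(\<integral>y. output_density y - 1 \<partial>noise) = 0"
    using integral_output_density noise.prob_space by (subst Bochner_Integration.integral_diff) auto
  ultimately show ?thesis by simp
qed

lemma input_component_bounded: "AE x in mu. \<forall>i<n. \<bar>x i\<bar> \<le> R"
  using sqnorm_input_bounded
proof eventually_elim
  case (elim x)
  show ?case
  proof safe
    fix i assume "i < n"
    then have "(x i)\<^sup>2 \<le> R\<^sup>2" using component_sq_le_sqnorm[of i n x] elim by linarith
    then show "\<bar>x i\<bar> \<le> R" using radius_nonneg power2_le_imp_le[of "\<bar>x i\<bar>" R] by simp
  qed
qed

lemma integrable_input_noise_sqnorm:
  "integrable (mu \<Otimes>\<^sub>M noise) (\<lambda>\<omega>. sqnorm n (fst \<omega>))"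
  "integrable (mu \<Otimes>\<^sub>M noise) (\<lambda>\<omega>. sqnorm n (snd \<omega>))"
  using integral_fst_input_noise(1)[of "sqnorm n"] integrable_input_sqnorm
    integral_snd_input_noise(1)[of "sqnorm n"] gauss_vec_sqnorm(1)[OF s_pos]
  by simp_all

lemma input_noise_component_uncorrelated:
  assumes i: "i < n"
  shows "integrable (mu \<Otimes>\<^sub>M noise) (\<lambda>\<omega>. fst \<omega> i * snd \<omega> i)"
    and "(\<integral>\<omega>. fst \<omega> i * snd \<omega> i \<partial>(mu \<Otimes>\<^sub>M noise)) = 0"
proof -
  have "integrable noise (\<lambda>z. \<bar>z i\<bar>)"
    using gauss_vec_component(1)[where h=abs, OF s_pos i] integrable_centered_normal_abs[OF s_pos] by simp
  then have "integrable (mu \<Otimes>\<^sub>M noise) (\<lambda>\<omega>. R * \<bar>snd \<omega> i\<bar>)"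
    using integral_snd_input_noise(1)[of "\<lambda>z. \<bar>z i\<bar>"] i by (auto simp: Rn_def)
  then show int: "integrable (mu \<Otimes>\<^sub>M noise) (\<lambda>\<omega>. fst \<omega> i * snd \<omega> i)"
  proof (rule Bochner_Integration.integrable_bound)
    show "AE \<omega> in mu \<Otimes>\<^sub>M noise. norm (fst \<omega> i * snd \<omega> i) \<le> norm (R * \<bar>snd \<omega> i\<bar>)"
      using AE_fst_input_noise[OF input_component_bounded]
    proof eventually_elim
      case (elim \<omega>)
      then have "\<bar>fst \<omega> i\<bar> \<le> R" using i by auto
      then show ?case using radius_nonneg by (simp add: abs_mult mult_right_mono)
    qed
  qed measurable
  have "(\<integral>z. z i \<partial>noise) = 0"
    using gauss_vec_component(2)[where h="\<lambda>t. t", OF s_pos i] centered_normal_moment_1(2)[OF s_pos] by simp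
  then have inner: "(\<integral>z. x i * z i \<partial>noise) = 0" for x :: "nat \<Rightarrow> real"
    by (simp only: integral_mult_right_zero mult_zero_right)
  have "(\<integral>\<omega>. fst \<omega> i * snd \<omega> i \<partial>(mu \<Otimes>\<^sub>M noise)) = (\<integral>x. (\<integral>z. x i * z i \<partial>noise) \<partial>mu)"
    using input_noise.integral_fst'[OF int] by (simp only: split_beta' fst_conv snd_conv)
  also have "\<dots> = 0" by (simp only: inner integral_zero)
  finally show "(\<integral>\<omega>. fst \<omega> i * snd \<omega> i \<partial>(mu \<Otimes>\<^sub>M noise)) = 0" .
qed

lemma input_noise_uncorrelated:
  "integrable (mu \<Otimes>\<^sub>M noise) (\<lambda>\<omega>. \<Sum>i<n. fst \<omega> i * snd \<omega> i)"
  "(\<integral>\<omega>. (\<Sum>i<n. fst \<omega> i * snd \<omega> i) \<partial>(mu \<Otimes>\<^sub>M noise)) = 0"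
  by (auto intro!: Bochner_Integration.integrable_sum
      simp: Bochner_Integration.integral_sum input_noise_component_uncorrelated)

lemma input_times_output_distr:
  "mu \<Otimes>\<^sub>M output_distr = density (mu \<Otimes>\<^sub>M noise) (\<lambda>\<omega>. output_density (snd \<omega>))"
proof -
  interpret Y: prob_space output_distr by (rule prob_space_output_distr)
  have "mu \<Otimes>\<^sub>M output_distr = density mu (\<lambda>_. 1) \<Otimes>\<^sub>M density noise output_density"
    by (simp add: density_1 output_distr_eq_density[symmetric])
  also have "\<dots> = density (mu \<Otimes>\<^sub>M noise) (\<lambda>(x, y). 1 * ennreal (output_density y))"
    by (rule pair_measure_density)
      (auto simp: output_distr_eq_density[symmetric] intro: Y.sigma_finite_measure_axioms noise.sigma_finite_measure_axioms)
  finally show ?thesis by (simp add: split_beta')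
qed

definition info_density :: "(nat \<Rightarrow> real) \<times> (nat \<Rightarrow> real) \<Rightarrow> real" where
  "info_density \<omega> = gauss_vec_ratio n s (fst \<omega>) (snd \<omega>) / output_density (snd \<omega>)"

lemma info_density_pos: "0 < info_density \<omega>"
  unfolding info_density_def using gauss_vec_ratio_pos output_density_pos by simp

lemma joint_distr_eq_density_info: "joint_distr = density (mu \<Otimes>\<^sub>M output_distr) info_density"
proof -
  have "density (mu \<Otimes>\<^sub>M output_distr) info_density =
        density (mu \<Otimes>\<^sub>M noise) (\<lambda>\<omega>. ennreal (output_density (snd \<omega>)) * ennreal (info_density \<omega>))"
    unfolding input_times_output_distr by (subst density_density_eq) (auto simp: info_density_def)
  also have "\<dots> = density (mu \<Otimes>\<^sub>M noise) (\<lambda>\<omega>. gauss_vec_ratio n s (fst \<omega>) (snd \<omega>))"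
  proof (intro density_cong AE_I2)
    fix \<omega> :: "(nat \<Rightarrow> real) \<times> (nat \<Rightarrow> real)"
    have "ennreal (output_density (snd \<omega>)) * ennreal (info_density \<omega>) = ennreal (output_density (snd \<omega>) * info_density \<omega>)"
      using output_density_pos[of "snd \<omega>"] info_density_pos[of \<omega>] by (subst ennreal_mult) auto
    also have "output_density (snd \<omega>) * info_density \<omega> = gauss_vec_ratio n s (fst \<omega>) (snd \<omega>)"
      using output_density_pos[of "snd \<omega>"] by (simp add: info_density_def)
    finally show "ennreal (output_density (snd \<omega>)) * ennreal (info_density \<omega>) =
        ennreal (gauss_vec_ratio n s (fst \<omega>) (snd \<omega>))" .
  qed (auto simp: info_density_def)
  finally show ?thesis using joint_distr_eq_density by simp
qed

lemma chan_MI_eq_integral_info_density: "chan_MI n mu noise = (\<integral>\<omega>. ln (info_density \<omega>) \<partial>joint_distr)"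
proof -
  interpret Y: prob_space output_distr by (rule prob_space_output_distr)
  interpret XY: pair_prob_space mu output_distr ..
  have "chan_MI n mu noise = KL_divergence (exp 1) (mu \<Otimes>\<^sub>M output_distr) joint_distr"
    unfolding chan_MI_def input_noise.mutual_information_def distr_fst_input_noise joint_distr_def output_distr_def
    by (simp add: vec_add_def)
  also have "\<dots> = (\<integral>\<omega>. ln (enn2real (RN_deriv (mu \<Otimes>\<^sub>M output_distr) joint_distr \<omega>)) \<partial>joint_distr)"
    unfolding KL_divergence_def entropy_density_def by (simp add: log_def o_def)
  also have "\<dots> = (\<integral>\<omega>. ln (info_density \<omega>) \<partial>joint_distr)"
  proof (rule integral_cong_AE)
    have "AE \<omega> in mu \<Otimes>\<^sub>M output_distr. ennreal (info_density \<omega>) = RN_deriv (mu \<Otimes>\<^sub>M output_distr) joint_distr \<omega>"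
      by (rule XY.RN_deriv_unique) (auto simp: joint_distr_eq_density_info info_density_def)
    then have "AE \<omega> in joint_distr. ennreal (info_density \<omega>) = RN_deriv (mu \<Otimes>\<^sub>M output_distr) joint_distr \<omega>"
      unfolding joint_distr_eq_density_info by (subst AE_density) (auto simp: info_density_def elim: AE_mp)
    then show "AE \<omega> in joint_distr. ln (enn2real (RN_deriv (mu \<Otimes>\<^sub>M output_distr) joint_distr \<omega>)) = ln (info_density \<omega>)"
      by eventually_elim (metis enn2real_ennreal less_imp_le info_density_pos)
  qed (auto simp: joint_distr_def info_density_def)
  finally show ?thesis .
qed

lemma chan_MI_eq: "chan_MI n mu noise = (\<integral>x. sqnorm n x \<partial>mu) / (2 * s\<^sup>2) - output_divergence"
proof -
  define a where "a \<omega> = sqnorm n (fst \<omega>) / (2 * s\<^sup>2) + (\<Sum>i<n. fst \<omega> i * snd \<omega> i) / s\<^sup>2"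
    for \<omega> :: "(nat \<Rightarrow> real) \<times> (nat \<Rightarrow> real)"
  have int_a: "integrable (mu \<Otimes>\<^sub>M noise) a"
    unfolding a_def using integrable_input_noise_sqnorm(1) input_noise_uncorrelated(1) by auto
  have integral_a: "(\<integral>\<omega>. a \<omega> \<partial>(mu \<Otimes>\<^sub>M noise)) = (\<integral>x. sqnorm n x \<partial>mu) / (2 * s\<^sup>2)"
    unfolding a_def using integrable_input_noise_sqnorm(1) input_noise_uncorrelated
    by (simp add: integral_fst_input_noise(2))
  have "ln (gauss_vec_ratio n s (fst \<omega>) (channel_output \<omega>)) = a \<omega>" for \<omega>
  proof -
    have "ln (gauss_vec_ratio n s (fst \<omega>) (channel_output \<omega>)) =
        (\<Sum>i<n. (fst \<omega> i)\<^sup>2 / (2 * s\<^sup>2) + fst \<omega> i * snd \<omega> i / s\<^sup>2)"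
      unfolding gauss_vec_ratio_def vec_add_def
      using s_pos by (simp, intro sum.cong refl) (simp add: power2_eq_square field_simps)
    then show ?thesis
      unfolding a_def sqnorm_def by (simp add: sum.distrib sum_divide_distrib)
  qed
  moreover have "ln (info_density (fst \<omega>, channel_output \<omega>)) =
      ln (gauss_vec_ratio n s (fst \<omega>) (channel_output \<omega>)) - ln (output_density (channel_output \<omega>))" for \<omega>
    unfolding info_density_def fst_conv snd_conv by (intro ln_divide_pos gauss_vec_ratio_pos output_density_pos)
  ultimately have ln_info: "ln (info_density (fst \<omega>, channel_output \<omega>)) = a \<omega> - ln (output_density (channel_output \<omega>))" for \<omega>
    by simp
  have int_ln: "integrable (mu \<Otimes>\<^sub>M noise) (\<lambda>\<omega>. ln (output_density (channel_output \<omega>)))"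
    using integrable_ln_output_density unfolding output_distr_def by (subst (asm) integrable_distr_eq) auto
  have "chan_MI n mu noise = (\<integral>\<omega>. ln (info_density (fst \<omega>, channel_output \<omega>)) \<partial>(mu \<Otimes>\<^sub>M noise))"
    unfolding chan_MI_eq_integral_info_density joint_distr_def
    by (subst integral_distr) (auto simp: info_density_def)
  also have "\<dots> = (\<integral>\<omega>. a \<omega> - ln (output_density (channel_output \<omega>)) \<partial>(mu \<Otimes>\<^sub>M noise))"
    by (simp only: ln_info)
  also have "\<dots> = (\<integral>\<omega>. a \<omega> \<partial>(mu \<Otimes>\<^sub>M noise)) - (\<integral>y. ln (output_density y) \<partial>output_distr)"
    using int_a int_ln unfolding output_distr_def by (subst integral_distr) auto
  finally show ?thesis
    using integral_a output_divergence_eq by simp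
qed

lemma integral_output_sqnorm:
  "integrable output_distr (sqnorm n)"
  "(\<integral>y. sqnorm n y \<partial>output_distr) = (\<integral>x. sqnorm n x \<partial>mu) + n * s\<^sup>2"
proof -
  have expand: "sqnorm n (channel_output \<omega>) =
      sqnorm n (fst \<omega>) + 2 * (\<Sum>i<n. fst \<omega> i * snd \<omega> i) + sqnorm n (snd \<omega>)" for \<omega>
    unfolding sqnorm_def vec_add_def
    by (simp add: power2_eq_square algebra_simps sum.distrib sum_distrib_left)
  have "integrable (mu \<Otimes>\<^sub>M noise) (\<lambda>\<omega>. sqnorm n (channel_output \<omega>))"
    unfolding expand using integrable_input_noise_sqnorm input_noise_uncorrelated(1) by auto
  then show "integrable output_distr (sqnorm n)"
    unfolding output_distr_def by (subst integrable_distr_eq) auto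
  have "(\<integral>y. sqnorm n y \<partial>output_distr) = (\<integral>\<omega>. sqnorm n (channel_output \<omega>) \<partial>(mu \<Otimes>\<^sub>M noise))"
    unfolding output_distr_def by (subst integral_distr) auto
  also have "\<dots> = (\<integral>x. sqnorm n x \<partial>mu) + n * s\<^sup>2"
    unfolding expand using integrable_input_noise_sqnorm input_noise_uncorrelated
    by (simp add: integral_fst_input_noise(2) integral_snd_input_noise(2) gauss_vec_sqnorm(2)[OF s_pos])
  finally show "(\<integral>y. sqnorm n y \<partial>output_distr) = (\<integral>x. sqnorm n x \<partial>mu) + n * s\<^sup>2" .
qed

end

section \<open>Adding noise decreases the output divergence\<close>

locale degraded_channels = c1: gaussian_channel n s1 R mu + c2: gaussian_channel n s2 R mu
  for n s1 s2 R mu +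
  assumes s1_less_s2: "s1 < s2"
begin

abbreviation extra_noise :: "(nat \<Rightarrow> real) measure" where
  "extra_noise \<equiv> gauss_vec n (sqrt (s2\<^sup>2 - s1\<^sup>2))"

abbreviation sum_map :: "(nat \<Rightarrow> real) \<times> (nat \<Rightarrow> real) \<Rightarrow> nat \<Rightarrow> real" where
  "sum_map \<omega> \<equiv> vec_add n (fst \<omega>) (snd \<omega>)"

lemma extra_noise_sd_pos: "0 < sqrt (s2\<^sup>2 - s1\<^sup>2)"
  using s1_less_s2 c1.s_pos by (simp add: power_strict_mono)

sublocale extra: prob_space extra_noise by (rule prob_space_gauss_vec[OF extra_noise_sd_pos])
sublocale noise_extra: pair_prob_space c1.noise extra_noise ..

lemma distr_noise_extra: "distr (c1.noise \<Otimes>\<^sub>M extra_noise) (Rn n) sum_map = c2.noise"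
proof -
  have "sqrt (s1\<^sup>2 + (sqrt (s2\<^sup>2 - s1\<^sup>2))\<^sup>2) = s2"
    using s1_less_s2 c1.s_pos c2.s_pos by (simp add: power_strict_mono less_imp_le)
  then show ?thesis
    using distr_gauss_vec_add[OF c1.s_pos extra_noise_sd_pos, of n] by simp
qed

lemma integral_noise_extra:
  fixes h :: "(nat \<Rightarrow> real) \<Rightarrow> real"
  assumes [measurable]: "h \<in> borel_measurable (Rn n)"
  shows "integrable (c1.noise \<Otimes>\<^sub>M extra_noise) (\<lambda>\<omega>. h (fst \<omega>)) \<longleftrightarrow> integrable c1.noise h"
    and "(\<integral>\<omega>. h (fst \<omega>) \<partial>(c1.noise \<Otimes>\<^sub>M extra_noise)) = (\<integral>x. h x \<partial>c1.noise)"
    and "integrable (c1.noise \<Otimes>\<^sub>M extra_noise) (\<lambda>\<omega>. h (sum_map \<omega>)) \<longleftrightarrow> integrable c2.noise h"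
    and "(\<integral>\<omega>. h (sum_map \<omega>) \<partial>(c1.noise \<Otimes>\<^sub>M extra_noise)) = (\<integral>x. h x \<partial>c2.noise)"
proof -
  have "distr (c1.noise \<Otimes>\<^sub>M extra_noise) (Rn n) fst = distr (c1.noise \<Otimes>\<^sub>M extra_noise) c1.noise fst"
    by (intro distr_cong) auto
  then have fst: "distr (c1.noise \<Otimes>\<^sub>M extra_noise) (Rn n) fst = c1.noise"
    using extra.distr_pair_fst by simp
  show "integrable (c1.noise \<Otimes>\<^sub>M extra_noise) (\<lambda>\<omega>. h (fst \<omega>)) \<longleftrightarrow> integrable c1.noise h"
    "(\<integral>\<omega>. h (fst \<omega>) \<partial>(c1.noise \<Otimes>\<^sub>M extra_noise)) = (\<integral>x. h x \<partial>c1.noise)"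
    using integrable_distr_eq[of fst "c1.noise \<Otimes>\<^sub>M extra_noise" "Rn n" h]
      integral_distr[of fst "c1.noise \<Otimes>\<^sub>M extra_noise" "Rn n" h]
    unfolding fst by auto
  show "integrable (c1.noise \<Otimes>\<^sub>M extra_noise) (\<lambda>\<omega>. h (sum_map \<omega>)) \<longleftrightarrow> integrable c2.noise h"
    "(\<integral>\<omega>. h (sum_map \<omega>) \<partial>(c1.noise \<Otimes>\<^sub>M extra_noise)) = (\<integral>x. h x \<partial>c2.noise)"
    using integrable_distr_eq[of sum_map "c1.noise \<Otimes>\<^sub>M extra_noise" "Rn n" h]
      integral_distr[of sum_map "c1.noise \<Otimes>\<^sub>M extra_noise" "Rn n" h]
    unfolding distr_noise_extra by auto
qed

lemma distr_output_extra: "distr (c1.output_distr \<Otimes>\<^sub>M extra_noise) (Rn n) sum_map = c2.output_distr"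
proof (rule measure_eqI)
  fix B assume "B \<in> sets (distr (c1.output_distr \<Otimes>\<^sub>M extra_noise) (Rn n) sum_map)"
  then have B[measurable]: "B \<in> sets (Rn n)" by simp
  have "emeasure (distr (c1.output_distr \<Otimes>\<^sub>M extra_noise) (Rn n) sum_map) B =
      (\<integral>\<^sup>+\<omega>. indicator B (sum_map \<omega>) \<partial>(c1.output_distr \<Otimes>\<^sub>M extra_noise))"
    by (subst nn_integral_indicator[symmetric], simp, subst nn_integral_distr) auto
  also have "\<dots> = (\<integral>\<^sup>+v. \<integral>\<^sup>+w. indicator B (vec_add n v w) \<partial>extra_noise \<partial>c1.output_distr)"
    by (subst extra.nn_integral_fst[symmetric]) (auto simp: split_beta')
  also have "\<dots> = (\<integral>\<^sup>+x. \<integral>\<^sup>+z. \<integral>\<^sup>+w. indicator B (vec_add n (vec_add n x z) w) \<partial>extra_noise \<partial>c1.noise \<partial>mu)"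
    by (rule c1.nn_integral_output_distr) measurable
  also have "\<dots> = (\<integral>\<^sup>+x. \<integral>\<^sup>+u. indicator B (vec_add n x u) \<partial>c2.noise \<partial>mu)"
    unfolding vec_add_assoc distr_noise_extra[symmetric]
    by (intro nn_integral_cong, subst nn_integral_distr) (auto simp: extra.nn_integral_fst[symmetric] split_beta')
  also have "\<dots> = emeasure c2.output_distr B"
    using c2.nn_integral_output_distr[of "indicator B"] by simp
  finally show "emeasure (distr (c1.output_distr \<Otimes>\<^sub>M extra_noise) (Rn n) sum_map) B = emeasure c2.output_distr B" .
qed simp

lemma output_extra_eq_density:
  "c1.output_distr \<Otimes>\<^sub>M extra_noise = density (c1.noise \<Otimes>\<^sub>M extra_noise) (\<lambda>\<omega>. c1.output_density (fst \<omega>))"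
proof -
  interpret Y: prob_space c1.output_distr by (rule c1.prob_space_output_distr)
  have "c1.output_distr \<Otimes>\<^sub>M extra_noise = density c1.noise c1.output_density \<Otimes>\<^sub>M density extra_noise (\<lambda>_. 1)"
    by (simp add: density_1 c1.output_distr_eq_density[symmetric])
  also have "\<dots> = density (c1.noise \<Otimes>\<^sub>M extra_noise) (\<lambda>(x, y). ennreal (c1.output_density x) * 1)"
    by (rule pair_measure_density) (auto simp: density_1 intro: extra.sigma_finite_measure_axioms)
  finally show ?thesis by (simp add: split_beta')
qed

lemma integral_cross_entropy:
  "integrable (c1.noise \<Otimes>\<^sub>M extra_noise) (\<lambda>\<omega>. c1.output_density (fst \<omega>) * ln (c2.output_density (sum_map \<omega>)))"
  "(\<integral>\<omega>. c1.output_density (fst \<omega>) * ln (c2.output_density (sum_map \<omega>)) \<partial>(c1.noise \<Otimes>\<^sub>M extra_noise)) =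
    c2.output_divergence"
proof -
  have nonneg: "AE \<omega> in c1.noise \<Otimes>\<^sub>M extra_noise. 0 \<le> c1.output_density (fst \<omega>)"
    using c1.output_density_pos by (auto intro: less_imp_le)
  have "integrable (c1.output_distr \<Otimes>\<^sub>M extra_noise) (\<lambda>\<omega>. ln (c2.output_density (sum_map \<omega>)))"
    using integrable_distr_eq[of sum_map "c1.output_distr \<Otimes>\<^sub>M extra_noise" "Rn n" "\<lambda>y. ln (c2.output_density y)"]
      c2.integrable_ln_output_density
    unfolding distr_output_extra by auto
  then show "integrable (c1.noise \<Otimes>\<^sub>M extra_noise) (\<lambda>\<omega>. c1.output_density (fst \<omega>) * ln (c2.output_density (sum_map \<omega>)))"
    unfolding output_extra_eq_density using nonneg by (subst (asm) integrable_density) auto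
  have "(\<integral>\<omega>. ln (c2.output_density (sum_map \<omega>)) \<partial>(c1.output_distr \<Otimes>\<^sub>M extra_noise)) =
      (\<integral>y. ln (c2.output_density y) \<partial>c2.output_distr)"
    unfolding distr_output_extra[symmetric] by (subst integral_distr) auto
  then show "(\<integral>\<omega>. c1.output_density (fst \<omega>) * ln (c2.output_density (sum_map \<omega>)) \<partial>(c1.noise \<Otimes>\<^sub>M extra_noise)) =
      c2.output_divergence"
    unfolding output_extra_eq_density c2.output_divergence_eq using nonneg by (subst (asm) integral_density) auto
qed

text \<open>Data processing: the second output is the first one plus independent noise, and
  \<open>p ln p - p ln q - p + q \<ge> 0\<close> integrated against the coupling gives \<open>D\<^sub>1 - D\<^sub>2 \<ge> 0\<close>.\<close>

lemma output_divergence_le: "c2.output_divergence \<le> c1.output_divergence"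
proof -
  let ?p = "\<lambda>\<omega>. c1.output_density (fst \<omega>)" and ?q = "\<lambda>\<omega>. c2.output_density (sum_map \<omega>)"
  let ?M = "c1.noise \<Otimes>\<^sub>M extra_noise"
  have gibbs: "0 \<le> a * ln a - a * ln b - a + b" if "0 < a" "0 < b" for a b :: real
  proof -
    have "ln b - ln a \<le> b / a - 1"
      using ln_le_minus_one[of "b / a"] that by (simp add: ln_div)
    then have "a * (ln b - ln a) \<le> a * (b / a - 1)" using that by (intro mult_left_mono) auto
    then show ?thesis using that by (simp add: algebra_simps)
  qed
  have int_p_ln_p: "integrable ?M (\<lambda>\<omega>. ?p \<omega> * ln (?p \<omega>))"
    and int_p: "integrable ?M ?p" and int_q: "integrable ?M ?q"
    using integral_noise_extra(1)[of "\<lambda>y. c1.output_density y * ln (c1.output_density y)"]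
      integral_noise_extra(1)[of c1.output_density] integral_noise_extra(3)[of c2.output_density]
      c1.integrable_output_entropy c1.integral_output_density(1) c2.integral_output_density(1)
    by simp_all
  have "0 \<le> (\<integral>\<omega>. ?p \<omega> * ln (?p \<omega>) - ?p \<omega> * ln (?q \<omega>) - ?p \<omega> + ?q \<omega> \<partial>?M)"
    by (intro integral_nonneg_AE AE_I2 gibbs c1.output_density_pos c2.output_density_pos)
  also have "\<dots> = (\<integral>\<omega>. ?p \<omega> * ln (?p \<omega>) \<partial>?M) - (\<integral>\<omega>. ?p \<omega> * ln (?q \<omega>) \<partial>?M) - (\<integral>\<omega>. ?p \<omega> \<partial>?M) + (\<integral>\<omega>. ?q \<omega> \<partial>?M)"
    using int_p_ln_p integral_cross_entropy(1) int_p int_q by simp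
  also have "\<dots> = c1.output_divergence - c2.output_divergence - 1 + 1"
    using integral_noise_extra(2)[of "\<lambda>y. c1.output_density y * ln (c1.output_density y)"]
      integral_noise_extra(2)[of c1.output_density] integral_noise_extra(4)[of c2.output_density]
      c1.integral_output_density(2) c2.integral_output_density(2) integral_cross_entropy(2)
    by (simp add: c1.output_divergence_def)
  finally show ?thesis by simp
qed

end

section \<open>Uniform input on the vertices of a cube\<close>

text \<open>This is Hoeffding's lemma for a fair sign.\<close>

lemma cosh_le_exp_half_sq: "cosh (u::real) \<le> exp (u\<^sup>2 / 2)"
proof -
  define h where "h = 2 * \<bar>u\<bar>"
  have "- h * (1/2) + ln (1 + (1/2) * (exp h - 1)) \<le> h\<^sup>2 / 8"
    using Hoeffdings_lemma_aux[of h "1/2"] by (simp add: h_def)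
  moreover have "1 + (1/2) * (exp h - 1) = exp \<bar>u\<bar> * cosh \<bar>u\<bar>"
    unfolding h_def cosh_def by (simp add: exp_add[symmetric] exp_minus field_simps)
  moreover have "cosh \<bar>u\<bar> = cosh u" by (cases "u \<ge> 0") auto
  moreover have "0 < cosh u" by (simp add: cosh_real_pos)
  ultimately have "ln (cosh u) \<le> u\<^sup>2 / 2"
    by (simp add: h_def ln_mult power2_eq_square)
  then show ?thesis using \<open>0 < cosh u\<close> by (metis exp_ln exp_le_cancel_iff)
qed

definition rademacher :: "real \<Rightarrow> real measure" where
  "rademacher a = distr (measure_pmf (bernoulli_pmf (1/2))) borel (\<lambda>b. if b then a else - a)"

definition cube_uniform :: "nat \<Rightarrow> real \<Rightarrow> (nat \<Rightarrow> real) measure" where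
  "cube_uniform n a = PiM {..<n} (\<lambda>_. rademacher a)"

lemma sets_rademacher [simp, measurable_cong]: "sets (rademacher a) = sets borel"
  by (simp add: rademacher_def)

lemma prob_space_rademacher: "prob_space (rademacher a)"
  unfolding rademacher_def by (rule prob_space.prob_space_distr) (auto simp: measure_pmf.prob_space_axioms)

lemma nn_integral_rademacher:
  assumes "\<And>u. 0 \<le> g u" and [measurable]: "g \<in> borel_measurable borel"
  shows "(\<integral>\<^sup>+u. ennreal (g u) \<partial>rademacher a) = ennreal ((g a + g (-a)) / 2)"
proof -
  have "(\<integral>\<^sup>+u. ennreal (g u) \<partial>rademacher a) =
      (\<integral>\<^sup>+b. ennreal (g (if b then a else -a)) \<partial>measure_pmf (bernoulli_pmf (1/2)))"
    unfolding rademacher_def by (subst nn_integral_distr) auto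
  also have "\<dots> = ennreal (g a) * ennreal (1/2) + ennreal (g (-a)) * ennreal (1 - 1/2)"
    by (subst nn_integral_bernoulli_pmf) auto
  also have "\<dots> = ennreal (g a * (1/2)) + ennreal (g (-a) * (1 - 1/2))"
    using assms(1) by (simp only: ennreal_mult)
  also have "\<dots> = ennreal ((g a + g (-a)) / 2)"
    using assms(1)[of a] assms(1)[of "-a"] by (simp add: ennreal_plus[symmetric] add_divide_distrib del: ennreal_plus)
  finally show ?thesis .
qed

lemma sets_cube_uniform [simp, measurable_cong]: "sets (cube_uniform n a) = sets (Rn n)"
  unfolding cube_uniform_def Rn_def by (intro sets_PiM_cong) auto

lemma prob_space_cube_uniform: "prob_space (cube_uniform n a)"
  unfolding cube_uniform_def by (intro prob_space_PiM prob_space_rademacher)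

lemma sqnorm_cube_uniform:
  assumes n: "0 < n" and R: "0 \<le> R"
  shows "AE x in cube_uniform n (R / sqrt n). sqnorm n x = R\<^sup>2"
proof -
  have "AE u in rademacher a. u = a \<or> u = - a" for a
    unfolding rademacher_def by (subst AE_distr_iff) auto
  then have "\<forall>i\<in>{..<n}. AE x in cube_uniform n a. x i = a \<or> x i = - a" for a
    unfolding cube_uniform_def by (intro ballI AE_PiM_component prob_space_rademacher)
  then have "AE x in cube_uniform n a. \<forall>i\<in>{..<n}. x i = a \<or> x i = - a" for a
    by (subst AE_finite_all) auto
  then show ?thesis
  proof eventually_elim
    case (elim x)
    then have "sqnorm n x = (\<Sum>i<n. (R / sqrt n)\<^sup>2)"
      unfolding sqnorm_def using elim by (intro sum.cong refl) (metis lessThan_iff power2_minus)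
    also have "\<dots> = R\<^sup>2" using n by (simp add: power_divide)
    finally show ?case .
  qed
qed

lemma gaussian_channel_cube_uniform:
  assumes n: "0 < n" and R: "0 \<le> R" and s: "0 < s"
  shows "gaussian_channel n s R (cube_uniform n (R / sqrt n))"
proof (rule gaussian_channel.intro[OF s prob_space_cube_uniform sets_cube_uniform])
  show "AE x in cube_uniform n (R / sqrt n). vnorm n x \<le> R"
    using sqnorm_cube_uniform[OF n R]
    by eventually_elim (use R in \<open>simp add: vnorm_def sqnorm_def[symmetric]\<close>)
qed

lemma normal_ratio_symmetric_mean_le:
  assumes s: "0 < s"
  shows "(normal_ratio s a v + normal_ratio s (-a) v) / 2 \<le> exp (- a\<^sup>2 / (2 * s\<^sup>2) + a\<^sup>2 * v\<^sup>2 / (2 * s^4))"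
proof -
  have "(normal_ratio s a v + normal_ratio s (-a) v) / 2 = exp (- a\<^sup>2 / (2 * s\<^sup>2)) * cosh (a * v / s\<^sup>2)"
    unfolding normal_ratio_def cosh_def by (simp add: exp_diff exp_minus field_simps)
  also have "\<dots> \<le> exp (- a\<^sup>2 / (2 * s\<^sup>2)) * exp ((a * v / s\<^sup>2)\<^sup>2 / 2)"
    by (intro mult_left_mono cosh_le_exp_half_sq) auto
  also have "\<dots> = exp (- a\<^sup>2 / (2 * s\<^sup>2) + a\<^sup>2 * v\<^sup>2 / (2 * s^4))"
    by (simp add: exp_add[symmetric] power_mult_distrib power_divide power2_eq_square[of s] power4_eq_xxxx)
  finally show ?thesis .
qed

locale cube_input_channel = gaussian_channel n s R "cube_uniform n (R / sqrt n)" for n s R +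
  assumes n_pos: "0 < n"
begin

lemma ln_output_density_le:
  "ln (output_density y) \<le> R\<^sup>2 * sqnorm n y / (2 * n * s^4) - R\<^sup>2 / (2 * s\<^sup>2)"
proof -
  let ?a = "R / sqrt n"
  interpret cube: product_prob_space "\<lambda>_ :: nat. rademacher ?a"
    by (intro product_prob_spaceI prob_space_rademacher)
  have "ennreal (output_density y) = (\<integral>\<^sup>+x. gauss_vec_ratio n s x y \<partial>cube_uniform n ?a)"
    by (rule output_density_bounds(1))
  also have "\<dots> = (\<Prod>i<n. \<integral>\<^sup>+u. ennreal (normal_ratio s u (y i)) \<partial>rademacher ?a)"
    unfolding gauss_vec_ratio_eq_prod cube_uniform_def
    by (rule cube.product_nn_integral_prod) (auto simp: normal_ratio_def)
  also have "\<dots> = (\<Prod>i<n. ennreal ((normal_ratio s ?a (y i) + normal_ratio s (-?a) (y i)) / 2))"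
    by (intro prod.cong refl nn_integral_rademacher) (auto simp: normal_ratio_def)
  also have "\<dots> = ennreal (\<Prod>i<n. (normal_ratio s ?a (y i) + normal_ratio s (-?a) (y i)) / 2)"
    by (rule prod_ennreal) (auto simp: normal_ratio_def intro: add_nonneg_nonneg)
  also have "\<dots> \<le> ennreal (\<Prod>i<n. exp (- ?a\<^sup>2 / (2 * s\<^sup>2) + ?a\<^sup>2 * (y i)\<^sup>2 / (2 * s^4)))"
    by (intro ennreal_leI prod_mono conjI normal_ratio_symmetric_mean_le s_pos)
      (auto simp: normal_ratio_def intro: add_nonneg_nonneg)
  also have "(\<Prod>i<n. exp (- ?a\<^sup>2 / (2 * s\<^sup>2) + ?a\<^sup>2 * (y i)\<^sup>2 / (2 * s^4))) =
      exp (R\<^sup>2 * sqnorm n y / (2 * n * s^4) - R\<^sup>2 / (2 * s\<^sup>2))"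
  proof -
    have sum_eq: "(\<Sum>i<n. - ?a\<^sup>2 / (2 * s\<^sup>2) + ?a\<^sup>2 * (y i)\<^sup>2 / (2 * s^4)) =
        real n * (- ?a\<^sup>2 / (2 * s\<^sup>2)) + ?a\<^sup>2 * sqnorm n y / (2 * s^4)"
      unfolding sqnorm_def by (simp add: sum.distrib sum_subtractf sum_distrib_left sum_divide_distrib)
    have a_sq: "?a\<^sup>2 = R\<^sup>2 / n" by (simp add: power_divide)
    have "(\<Sum>i<n. - ?a\<^sup>2 / (2 * s\<^sup>2) + ?a\<^sup>2 * (y i)\<^sup>2 / (2 * s^4)) =
        R\<^sup>2 * sqnorm n y / (2 * n * s^4) - R\<^sup>2 / (2 * s\<^sup>2)"
      using n_pos unfolding sum_eq unfolding a_sq by (simp add: field_simps)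
    then show ?thesis by (simp add: exp_sum[symmetric])
  qed
  finally have "output_density y \<le> exp (R\<^sup>2 * sqnorm n y / (2 * n * s^4) - R\<^sup>2 / (2 * s\<^sup>2))"
    by (simp add: ennreal_le_iff2)
  then have "ln (output_density y) \<le> ln (exp (R\<^sup>2 * sqnorm n y / (2 * n * s^4) - R\<^sup>2 / (2 * s\<^sup>2)))"
    using output_density_pos[of y] by (subst ln_le_cancel_iff) auto
  then show ?thesis by simp
qed

lemma integral_input_sqnorm_cube:
  "(\<integral>x. sqnorm n x \<partial>cube_uniform n (R / sqrt n)) = R\<^sup>2"
proof -
  have "(\<integral>x. sqnorm n x \<partial>cube_uniform n (R / sqrt n)) = (\<integral>x. R\<^sup>2 \<partial>cube_uniform n (R / sqrt n))"
    using sqnorm_cube_uniform[OF n_pos radius_nonneg] by (intro integral_cong_AE) auto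
  then show ?thesis
    using input.prob_space by simp
qed

lemma output_divergence_le: "output_divergence \<le> R^4 / (2 * n * s^4)"
proof -
  interpret Y: prob_space output_distr by (rule prob_space_output_distr)
  have "output_divergence \<le> (\<integral>y. R\<^sup>2 / (2 * n * s^4) * sqnorm n y - R\<^sup>2 / (2 * s\<^sup>2) \<partial>output_distr)"
    unfolding output_divergence_eq using integrable_ln_output_density integral_output_sqnorm(1) ln_output_density_le
    by (intro integral_mono) auto
  also have "\<dots> = R\<^sup>2 / (2 * n * s^4) * (R\<^sup>2 + n * s\<^sup>2) - R\<^sup>2 / (2 * s\<^sup>2)"
    using integral_output_sqnorm integral_input_sqnorm_cube Y.prob_space by simp
  also have "\<dots> = R^4 / (2 * n * s^4)"
    using n_pos s_pos by (simp add: field_simps power2_eq_square power4_eq_xxxx)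
  finally show ?thesis .
qed

end

section \<open>The secrecy capacity\<close>

lemma gaussian_channel_of_input_dists:
  "mu \<in> input_dists n R \<Longrightarrow> 0 < s \<Longrightarrow> gaussian_channel n s R mu"
  unfolding input_dists_def by (intro gaussian_channel.intro) auto

lemma secrecy_rate_le:
  assumes mu: "mu \<in> input_dists n R" and s1: "0 < s1" and s12: "s1 < s2"
  shows "chan_MI n mu (gauss_vec n s1) - chan_MI n mu (gauss_vec n s2) \<le> R\<^sup>2 * (1 / (2 * s1\<^sup>2) - 1 / (2 * s2\<^sup>2))"
proof -
  interpret degraded_channels n s1 s2 R mu
    using s1 s12 by (intro degraded_channels.intro degraded_channels_axioms.intro
        gaussian_channel_of_input_dists[OF mu] s1) auto
  have gap: "0 \<le> 1 / (2 * s1\<^sup>2) - 1 / (2 * s2\<^sup>2)"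
    using s1 s12 by (simp add: frac_le power_strict_mono less_imp_le)
  have "chan_MI n mu (gauss_vec n s1) - chan_MI n mu (gauss_vec n s2) =
      (\<integral>x. sqnorm n x \<partial>mu) * (1 / (2 * s1\<^sup>2) - 1 / (2 * s2\<^sup>2)) - c1.output_divergence + c2.output_divergence"
    unfolding c1.chan_MI_eq c2.chan_MI_eq by (simp add: field_simps)
  also have "\<dots> \<le> R\<^sup>2 * (1 / (2 * s1\<^sup>2) - 1 / (2 * s2\<^sup>2))"
    using output_divergence_le mult_right_mono[OF c1.integral_input_sqnorm_le gap] by simp
  finally show ?thesis .
qed

lemma secrecy_rate_cube_uniform_ge:
  assumes n: "0 < n" and R: "0 \<le> R" and s1: "0 < s1" and s12: "s1 < s2"
  shows "R\<^sup>2 * (1 / (2 * s1\<^sup>2) - 1 / (2 * s2\<^sup>2)) - R^4 / (2 * s1^4) / n \<le>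
    chan_MI n (cube_uniform n (R / sqrt n)) (gauss_vec n s1) - chan_MI n (cube_uniform n (R / sqrt n)) (gauss_vec n s2)"
proof -
  interpret c1: cube_input_channel n s1 R
    by (intro cube_input_channel.intro cube_input_channel_axioms.intro gaussian_channel_cube_uniform n R s1)
  interpret c2: gaussian_channel n s2 R "cube_uniform n (R / sqrt n)"
    using s1 s12 by (intro gaussian_channel_cube_uniform n R) simp
  have "chan_MI n (cube_uniform n (R / sqrt n)) (gauss_vec n s1) - chan_MI n (cube_uniform n (R / sqrt n)) (gauss_vec n s2)
      = R\<^sup>2 * (1 / (2 * s1\<^sup>2) - 1 / (2 * s2\<^sup>2)) - c1.output_divergence + c2.output_divergence"
    unfolding c1.chan_MI_eq c2.chan_MI_eq c1.integral_input_sqnorm_cube by (simp add: field_simps)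
  moreover have "c1.output_divergence \<le> R^4 / (2 * s1^4) / n"
    using c1.output_divergence_le by (simp add: field_simps)
  ultimately show ?thesis
    using c2.output_divergence_nonneg by simp
qed

lemma cube_uniform_in_input_dists:
  "0 < n \<Longrightarrow> 0 \<le> R \<Longrightarrow> cube_uniform n (R / sqrt n) \<in> input_dists n R"
  using gaussian_channel_cube_uniform[of n R 1] unfolding input_dists_def gaussian_channel_def by auto

lemma Cs_le:
  assumes "0 < n" "0 \<le> R" "0 < s1" "s1 < s2"
  shows "Cs s1 s2 R n \<le> R\<^sup>2 * (1 / (2 * s1\<^sup>2) - 1 / (2 * s2\<^sup>2))"
  using cube_uniform_in_input_dists[OF assms(1,2)] unfolding Cs_def
  by (intro cSUP_least secrecy_rate_le assms) auto

lemma Cs_ge: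
  assumes "0 < n" "0 \<le> R" "0 < s1" "s1 < s2"
  shows "R\<^sup>2 * (1 / (2 * s1\<^sup>2) - 1 / (2 * s2\<^sup>2)) - R^4 / (2 * s1^4) / n \<le> Cs s1 s2 R n"
proof -
  let ?rate = "\<lambda>mu. chan_MI n mu (gauss_vec n s1) - chan_MI n mu (gauss_vec n s2)"
  have "bdd_above (?rate ` input_dists n R)"
    by (rule bdd_aboveI2) (rule secrecy_rate_le[OF _ assms(3,4)])
  then have "?rate (cube_uniform n (R / sqrt n)) \<le> Cs s1 s2 R n"
    unfolding Cs_def by (rule cSUP_upper[OF cube_uniform_in_input_dists[OF assms(1,2)]])
  then show ?thesis
    using secrecy_rate_cube_uniform_ge[OF assms] by linarith
qed

theorem theorem6:
  fixes R s1 s2 :: real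
  assumes "0 \<le> R" and "0 < s1" and "s1 < s2"
    and "assumption_A"
  shows "(\<lambda>n. Cs s1 s2 R n) \<longlonglongrightarrow> R\<^sup>2 * (1 / (2 * s1\<^sup>2) - 1 / (2 * s2\<^sup>2))"
proof (rule tendsto_sandwich)
  let ?L = "R\<^sup>2 * (1 / (2 * s1\<^sup>2) - 1 / (2 * s2\<^sup>2))" and ?K = "R^4 / (2 * s1^4)"
  show "\<forall>\<^sub>F n in sequentially. ?L - ?K / real n \<le> Cs s1 s2 R n"
    using eventually_gt_at_top[of 0] by eventually_elim (rule Cs_ge[OF _ assms(1-3)])
  show "\<forall>\<^sub>F n in sequentially. Cs s1 s2 R n \<le> ?L"
    using eventually_gt_at_top[of 0] by eventually_elim (rule Cs_le[OF _ assms(1-3)])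
  show "(\<lambda>n. ?L - ?K / real n) \<longlonglongrightarrow> ?L"
    using tendsto_diff[OF tendsto_const lim_const_over_n[of ?K]] by simp
qed simp

end
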